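(* Fix an integer $r\ge 2$. Let $L$, $f$, $n_0$, $\mathcal{H}_{2D}$, $h_{TI}$, $v_{TI}$ and the two-site operator $h$ be as in the context. Let $x\in\{0,1\}^*$ with $x\in L$, let $n=f(x)\ge n_0$, and set $H=\sum_{\{u,v\}\in E_{\Lambda_r(n)}}h^{u,v}$. Then $E_0(H)\le 4n^r(r-1)+1/g(n)$ for any polynomial $g(n)$.
   Context: **Lattice.** $\Lambda_r(n)=\mathbb{Z}^r/n\mathbb{Z}^r$ is the periodic $r$-dimensional lattice of side $n$. The Lee metric is $d(x,y)=\sum_i\min(|x_i-y_i|,n-|x_i-y_i|)$, and $E_{\Lambda_r(n)}=\{\{x,y\}:d(x,y)=1\}$. $E_0(\cdot)$ is the smallest eigenvalue. **The 2D ingredients.** $L$ is a $\mathrm{QMA}_{\mathrm{EXP}}$-complete language, and $f:\{0,1\}^*\to\mathbb{Z}$, $n_0$, $\mathcal{H}_{2D}$, $h_{TI},v_{TI}$ satisfy the following. - $f(x)$ is a multiple of $3$ with $f(x)/3$ prime, $\log f(x)=O(\mathrm{poly}|x|)$, and $f$ is poly-time computable. - $h_{TI},v_{TI}$ are positive semidefinite operators on $\mathcal{H}_{2D}\otimes\mathcal{H}_{2D}$. - Let $n=f(x)\ge n_0$. On the $n\times n$ periodic square lattice, let $H_{TI}=\sum h_{TI}^{u,w}+\sum v_{TI}^{y,z}$, where the sums run over ordered pairs with $w$ the right neighbour of $u$ and $z$ the upper neighbour of $y$. Then $E_0(H_{TI})\le O(n^{-k})$ for an arbitrarily large constant $k$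 if $x\in L$, and $E_0(H_{TI})\ge\Omega(n^{-3})$ if $x\notin L$. **Local Hilbert space.** Let $T_1=\{\text{red},\text{yellow},\text{blue}\}$ ("colours") and $T_2=\{0,1,2\}$ ("numbers"). Each site carries $$(\mathcal{H}_{T_1}\otimes\mathcal{H}_{T_2}\otimes\mathcal{H}_{\sigma_1}\otimes\mathcal{H}_{\sigma_2})\otimes(\mathcal{H}'_{T_1}\otimes\mathcal{H}'_{T_2}\otimes\mathcal{H}'_{\sigma_1}\otimes\mathcal{H}'_{\sigma_2})\otimes\mathcal{H}_{2D},$$ where $\mathcal{H}_{T_1},\mathcal{H}'_{T_1}\cong\mathbb{C}^3$ have basis $T_1$, $\mathcal{H}_{T_2},\mathcal{H}'_{T_2}\cong\mathbb{C}^3$ have basis $T_2$, and $\mathcal{H}_{\sigma_i},\mathcal{H}'_{\sigma_i}$ are qubits. **Terms acting on sites $u,v$ (first copy).** - Tiling rule: $h_{tile}=8\sum_{(s,t)\in V}|s,t\rangle\langle s,t|$ on the $(T_1,T_2)$ registers of $u$ and $v$. Here $V$ is the set of pairs of tiles $s=(c,i)$, $t=(c',j)$ such that either $c=c'$ and $i=j$, or $c\ne c'$ and $i\ne j$. - EPR coupling: $A^{u,v}=16\sum_{i\in T_2}|i,i+1\bmod 3\rangle\langle i,i+1\bmod 3|_{T_2}\otimes\tfrac12(I-|\Phi^+\rangle\langle\Phi^+|)_{u_{\sigma_2}v_{\sigma_1}}$, with $|\Phi^+\rangle=(|00\rangle+|11\rangle)/\sqrt2$. Then $h_{EPR}=A^{u,v}+A^{v,u}$.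 - Loop penalty: $h_{loop}=2\sum_{c\ne d\in T_1}|c,d\rangle\langle c,d|$ on the $T_1$ registers. - The primed terms $h'_{tile},h'_{EPR},h'_{loop}$ are the same operators acting on the primed (second-copy) registers. - Copy constraint: $h_{copy}=\big(\sum_{c}|c,c\rangle\langle c,c|\big)_{\mathcal{H}_{T_1}}\otimes\big(\sum_d|d,d\rangle\langle d,d|\big)_{\mathcal{H}'_{T_1}}$. - Embedded 2D terms: $h_{RI}=\sum_i|i,i+1\bmod3\rangle\langle i,i+1\bmod3|_{\mathcal{H}_{T_2}}\otimes h_{TI}+\sum_i|i,i-1\bmod3\rangle\langle i,i-1\bmod3|_{\mathcal{H}_{T_2}}\otimes S h_{TI}S$, acting on $\mathcal{H}_{2D}\otimes\mathcal{H}_{2D}$, where $S$ is the swap of the two sites. The term $v_{RI}$ is defined identically with $\mathcal{H}'_{T_2}$ in place of $\mathcal{H}_{T_2}$ and $v_{TI}$ in place of $h_{TI}$. Finally, $h=h_{tile}+h_{EPR}+h_{loop}+h'_{tile}+h'_{EPR}+h'_{loop}+h_{copy}+h_{RI}+v_{RI}$. *)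

theory Defs
  imports "HOL-Library.FuncSet" "HOL-Computational_Algebra.Primes"
          "Jordan_Normal_Form.Jordan_Normal_Form"
begin

text \<open>A Hermitian operator on the space of functions \<open>B \<rightarrow> \<complex>\<close> (B a finite basis)
  is given by its matrix elements \<open>A b b'\<close> = <b|A|b'>.  We turn it into a JNF matrix by
  (an arbitrary, fixed) enumeration of the basis; the spectrum does not depend on it.\<close>

definition op_mat :: "'b set \<Rightarrow> ('b \<Rightarrow> 'b \<Rightarrow> complex) \<Rightarrow> complex mat" where
  "op_mat B A = (let e = (SOME e. bij_betw e {..<card B} B)
                 in mat (card B) (card B) (\<lambda>(i, j). A (e i) (e j)))"

definition E0 :: "complex mat \<Rightarrow> real" where
  "E0 M = Min {e :: real. eigenvalue M (complex_of_real e)}"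

definition psd :: "nat \<Rightarrow> complex mat \<Rightarrow> bool" where
  "psd m A \<longleftrightarrow> A \<in> carrier_mat m m
     \<and> (\<forall>i<m. \<forall>j<m. A $$ (i, j) = cnj (A $$ (j, i)))
     \<and> (\<forall>v \<in> carrier_vec m. 0 \<le> Re (\<Sum>i<m. cnj (vec_index v i) * vec_index (A *\<^sub>v v) i))"

text \<open>A two-site term \<open>t a b a' b'\<close> = <a,b| t |a',b'> (ket/bra on the two sites u, v,
  in this order).  Its embedding \<open>t^{u,v}\<close> into the many-body space over sites S with
  local basis states Loc: configurations are extensional functions \<open>S \<rightarrow> Loc\<close>.\<close>
definition embed2 :: "'s set \<Rightarrow> 's \<Rightarrow> 's \<Rightarrow> ('l \<Rightarrow> 'l \<Rightarrow> 'l \<Rightarrow> 'l \<Rightarrow> complex)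
    \<Rightarrow> ('s \<Rightarrow> 'l) \<Rightarrow> ('s \<Rightarrow> 'l) \<Rightarrow> complex" where
  "embed2 S u v t c c' =
     (if \<forall>w\<in>S - {u, v}. c w = c' w then t (c u) (c v) (c' u) (c' v) else 0)"

definition ham :: "'s set \<Rightarrow> ('s \<times> 's) set \<Rightarrow> ('l \<Rightarrow> 'l \<Rightarrow> 'l \<Rightarrow> 'l \<Rightarrow> complex)
    \<Rightarrow> ('s \<Rightarrow> 'l) \<Rightarrow> ('s \<Rightarrow> 'l) \<Rightarrow> complex" where
  "ham S P t c c' = (\<Sum>(u, v)\<in>P. embed2 S u v t c c')"

definition configs :: "'s set \<Rightarrow> 'l set \<Rightarrow> ('s \<Rightarrow> 'l) set" where
  "configs S Loc = PiE S (\<lambda>_. Loc)"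

text \<open>Conjugation by the swap S of the two sites: <a,b|S t S|a',b'> = <b,a|t|b',a'>.\<close>
definition swap_term :: "('l \<Rightarrow> 'l \<Rightarrow> 'l \<Rightarrow> 'l \<Rightarrow> complex) \<Rightarrow> ('l \<Rightarrow> 'l \<Rightarrow> 'l \<Rightarrow> 'l \<Rightarrow> complex)" where
  "swap_term t a b a' b' = t b a b' a'"

text \<open>Matrix element of an operator on \<open>H_2D \<otimes> H_2D\<close> (dim D each), basis |p,q> with
  index p*D+q (p on the first site).\<close>
definition entry2 :: "nat \<Rightarrow> complex mat \<Rightarrow> nat \<Rightarrow> nat \<Rightarrow> nat \<Rightarrow> nat \<Rightarrow> complex" where
  "entry2 D M p q p' q' = M $$ (p * D + q, p' * D + q')"

definition sq_sites :: "nat \<Rightarrow> (nat \<times> nat) set" where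
  "sq_sites n = {..<n} \<times> {..<n}"

definition right_pairs :: "nat \<Rightarrow> ((nat \<times> nat) \<times> (nat \<times> nat)) set" where
  "right_pairs n = {(u, w). u \<in> sq_sites n \<and> w = ((fst u + 1) mod n, snd u)}"

definition up_pairs :: "nat \<Rightarrow> ((nat \<times> nat) \<times> (nat \<times> nat)) set" where
  "up_pairs n = {(y, z). y \<in> sq_sites n \<and> z = (fst y, (snd y + 1) mod n)}"

definition H_TI :: "nat \<Rightarrow> complex mat \<Rightarrow> complex mat \<Rightarrow> nat \<Rightarrow> complex mat" where
  "H_TI D hTI vTI n = op_mat (configs (sq_sites n) {..<D})
     (\<lambda>c c'. ham (sq_sites n) (right_pairs n) (entry2 D hTI) c c'
           + ham (sq_sites n) (up_pairs n) (entry2 D vTI) c c')"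

definition lattice :: "nat \<Rightarrow> nat \<Rightarrow> (nat \<Rightarrow> nat) set" where
  "lattice r n = PiE {..<r} (\<lambda>_. {..<n})"

definition lee :: "nat \<Rightarrow> nat \<Rightarrow> (nat \<Rightarrow> nat) \<Rightarrow> (nat \<Rightarrow> nat) \<Rightarrow> int" where
  "lee r n x y = (\<Sum>i<r. min \<bar>int (x i) - int (y i)\<bar> (int n - \<bar>int (x i) - int (y i)\<bar>))"

definition edges :: "nat \<Rightarrow> nat \<Rightarrow> (nat \<Rightarrow> nat) set set" where
  "edges r n = {{x, y} | x y. x \<in> lattice r n \<and> y \<in> lattice r n \<and> lee r n x y = 1}"

text \<open>Each unordered edge {u,v} is summed once, via an (arbitrary but fixed) orientation
  (u,v) with u chosen from the edge; h is symmetric under swapping its sites.\<close>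
definition oriented_edges :: "nat \<Rightarrow> nat \<Rightarrow> ((nat \<Rightarrow> nat) \<times> (nat \<Rightarrow> nat)) set" where
  "oriented_edges r n = {(u, v). {u, v} \<in> edges r n \<and> u \<noteq> v \<and> u = (SOME w. w \<in> {u, v})}"

text \<open>Registers of one site: colour, number, two qubits, their primed copies, and \<open>H_2D\<close>.
  Colours red, yellow, blue are encoded as 0, 1, 2.\<close>
datatype reg = T1 | T2 | S1 | S2 | T1' | T2' | S1' | S2' | Q

definition reg_dim :: "nat \<Rightarrow> reg \<Rightarrow> nat" where
  "reg_dim D r = (case r of T1 \<Rightarrow> 3 | T2 \<Rightarrow> 3 | S1 \<Rightarrow> 2 | S2 \<Rightarrow> 2
                   | T1' \<Rightarrow> 3 | T2' \<Rightarrow> 3 | S1' \<Rightarrow> 2 | S2' \<Rightarrow> 2 | Q \<Rightarrow> D)"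

definition loc :: "nat \<Rightarrow> (reg \<Rightarrow> nat) set" where
  "loc D = PiE UNIV (\<lambda>r. {..<reg_dim D r})"

type_synonym term2 = "(reg \<Rightarrow> nat) \<Rightarrow> (reg \<Rightarrow> nat) \<Rightarrow> (reg \<Rightarrow> nat) \<Rightarrow> (reg \<Rightarrow> nat) \<Rightarrow> complex"

definition acts :: "reg set \<Rightarrow> reg set \<Rightarrow> term2 \<Rightarrow> term2" where
  "acts Ru Rv f a b a' b' =
     (if (\<forall>r. r \<notin> Ru \<longrightarrow> a r = a' r) \<and> (\<forall>r. r \<notin> Rv \<longrightarrow> b r = b' r)
      then f a b a' b' else 0)"

definition tileV :: "nat \<times> nat \<Rightarrow> nat \<times> nat \<Rightarrow> bool" where
  "tileV s t \<longleftrightarrow> (fst s = fst t \<and> snd s = snd t) \<or> (fst s \<noteq> fst t \<and> snd s \<noteq> snd t)"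

definition h_tile_gen :: "reg \<Rightarrow> reg \<Rightarrow> term2" where
  "h_tile_gen C N = acts {} {} (\<lambda>a b a' b'. if tileV (a C, a N) (b C, b N) then 8 else 0)"

text \<open>\<open>A^{u,v} = 16 \<Sum>_i |i,i+1><i,i+1|_{N} \<otimes> (1/2)(I - |\<Phi>+><\<Phi>+|)_{u_{\<sigma>2} v_{\<sigma>1}}\<close>,
  using <p q|\<Phi>+><\<Phi>+|p' q'> = [p=q][p'=q']/2.\<close>
definition A_gen :: "reg \<Rightarrow> reg \<Rightarrow> reg \<Rightarrow> term2" where
  "A_gen N Sa Sb = acts {Sb} {Sa} (\<lambda>a b a' b'.
      if b N = (a N + 1) mod 3 then
        16 * ((1/2) * ((if a Sb = a' Sb \<and> b Sa = b' Sa then 1 else 0)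
                      - (if a Sb = b Sa \<and> a' Sb = b' Sa then 1/2 else 0)))
      else 0)"

definition h_EPR_gen :: "reg \<Rightarrow> reg \<Rightarrow> reg \<Rightarrow> term2" where
  "h_EPR_gen N Sa Sb a b a' b' = A_gen N Sa Sb a b a' b' + swap_term (A_gen N Sa Sb) a b a' b'"

definition h_loop_gen :: "reg \<Rightarrow> term2" where
  "h_loop_gen C = acts {} {} (\<lambda>a b a' b'. if a C \<noteq> b C then 2 else 0)"

definition h_copy :: term2 where
  "h_copy = acts {} {} (\<lambda>a b a' b'. if a T1 = b T1 \<and> a T1' = b T1' then 1 else 0)"

text \<open>\<open>\<Sum>_i |i,i+1><i,i+1|_N \<otimes> M + \<Sum>_i |i,i-1><i,i-1|_N \<otimes> S M S\<close>, M acting on the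
  \<open>H_2D\<close> registers of the two sites.\<close>
definition h_RI_gen :: "nat \<Rightarrow> reg \<Rightarrow> complex mat \<Rightarrow> term2" where
  "h_RI_gen D N M = acts {Q} {Q} (\<lambda>a b a' b'.
      (if b N = (a N + 1) mod 3 then entry2 D M (a Q) (b Q) (a' Q) (b' Q) else 0)
    + (if b N = (a N + 2) mod 3 then entry2 D M (b Q) (a Q) (b' Q) (a' Q) else 0))"

definition h_full :: "nat \<Rightarrow> complex mat \<Rightarrow> complex mat \<Rightarrow> term2" where
  "h_full D hTI vTI a b a' b' =
       h_tile_gen T1 T2 a b a' b' + h_EPR_gen T2 S1 S2 a b a' b'
     + h_loop_gen T1 a b a' b'
     + h_tile_gen T1' T2' a b a' b' + h_EPR_gen T2' S1' S2' a b a' b'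
     + h_loop_gen T1' a b a' b'
     + h_copy a b a' b'
     + h_RI_gen D T2 hTI a b a' b' + h_RI_gen D T2' vTI a b a' b'"

definition H_r :: "nat \<Rightarrow> complex mat \<Rightarrow> complex mat \<Rightarrow> nat \<Rightarrow> nat \<Rightarrow> complex mat" where
  "H_r D hTI vTI r n = op_mat (configs (lattice r n) (loc D))
     (ham (lattice r n) (oriented_edges r n) (h_full D hTI vTI))"

end

theory Submission
  imports Defs "Jordan_Normal_Form.Spectral_Radius"
begin

(* The bound is witnessed by an explicit eigenvector of H.  Give the site x of the torus the
   tile (sum of x_k over k ~= i, mod 3; x_i mod 3) in copy i = 0 (unprimed) and i = 1 (primed);
   this is periodic because 3 divides n.  A step in direction 0 (resp. 1) changes only the
   number of copy 0 (resp. 1) and the colour of the other copy, any other step changes both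
   colours: no tiling or copy penalty is ever paid, and the loop penalties add up to
   2 + 2 + 4(r - 2) = 4(r - 1) per site.  Bonds in directions 0 and 1 carry EPR pairs, which
   A annihilates, and along them the numbers increase, so h_RI and v_RI act on every plane
   spanned by directions 0 and 1 exactly as H_TI does.  Putting a ground state of H_TI on each
   of the n^(r-2) planes gives an eigenvector with eigenvalue 4(r - 1) n^r + n^(r-2) E0(H_TI),
   and on yes-instances n^(r-2) E0(H_TI) <= C / n^k. *)

section \<open>Spectra of operators given by matrix elements\<close>

definition op_mat_enum :: "'b set \<Rightarrow> nat \<Rightarrow> 'b" where
  "op_mat_enum B = (SOME e. bij_betw e {..<card B} B)"

lemma bij_betw_op_mat_enum:
  assumes "finite B"
  shows "bij_betw (op_mat_enum B) {..<card B} B"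
proof -
  have "\<exists>e. bij_betw e {..<card B} B"
    using ex_bij_betw_nat_finite[OF assms] by (auto simp: atLeast0LessThan)
  thus ?thesis unfolding op_mat_enum_def by (rule someI_ex)
qed

lemma op_mat_eq_mat:
  "op_mat B A = mat (card B) (card B) (\<lambda>(i, j). A (op_mat_enum B i) (op_mat_enum B j))"
  by (simp add: op_mat_def op_mat_enum_def Let_def)

lemma op_mat_carrier_mat: "op_mat B A \<in> carrier_mat (card B) (card B)"
  by (simp add: op_mat_eq_mat)

lemma dim_row_op_mat [simp]: "dim_row (op_mat B A) = card B"
  by (simp add: op_mat_eq_mat)

lemma op_mat_mult_vec_index:
  assumes "i < card B" and "dim_vec v = card B"
  shows "(op_mat B A *\<^sub>v v) $ i = (\<Sum>j<card B. A (op_mat_enum B i) (op_mat_enum B j) * v $ j)"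
  using assms by (simp add: op_mat_eq_mat mult_mat_vec_def scalar_prod_def atLeast0LessThan)

lemma eigenvalue_op_matI:
  assumes fin: "finite B"
    and eq: "\<And>c. c \<in> B \<Longrightarrow> (\<Sum>b\<in>B. A c b * \<psi> b) = \<mu> * \<psi> c"
    and b0: "b0 \<in> B" and nz: "\<psi> b0 \<noteq> 0"
  shows "eigenvalue (op_mat B A) \<mu>"
proof -
  let ?e = "op_mat_enum B"
  have bij: "bij_betw ?e {..<card B} B" by (rule bij_betw_op_mat_enum[OF fin])
  define v where "v = vec (card B) (\<lambda>i. \<psi> (?e i))"
  have dv: "dim_vec v = card B" by (simp add: v_def)
  have Mv: "op_mat B A *\<^sub>v v = \<mu> \<cdot>\<^sub>v v"
  proof (rule eq_vecI)
    fix i assume "i < dim_vec (\<mu> \<cdot>\<^sub>v v)"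
    hence i: "i < card B" by (simp add: v_def)
    have "(op_mat B A *\<^sub>v v) $ i = (\<Sum>j<card B. A (?e i) (?e j) * \<psi> (?e j))"
      using op_mat_mult_vec_index[OF i dv] by (simp add: v_def)
    also have "\<dots> = (\<Sum>b\<in>B. A (?e i) b * \<psi> b)"
      by (rule sum.reindex_bij_betw[OF bij])
    also have "\<dots> = \<mu> * \<psi> (?e i)" using eq bij i by (meson bij_betwE lessThan_iff)
    finally show "(op_mat B A *\<^sub>v v) $ i = (\<mu> \<cdot>\<^sub>v v) $ i" using i by (simp add: v_def)
  qed (simp add: v_def)
  obtain i0 where i0: "i0 < card B" "?e i0 = b0"
    using bij b0 unfolding bij_betw_def by (metis imageE lessThan_iff)
  have "v $ i0 \<noteq> 0" using i0 nz by (simp add: v_def)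
  hence "v \<noteq> 0\<^sub>v (card B)" using i0 by auto
  hence "eigenvector (op_mat B A) v \<mu>"
    unfolding eigenvector_def dim_row_op_mat using Mv carrier_vecI[OF dv] by blast
  thus ?thesis unfolding eigenvalue_def by blast
qed

lemma eigenvalue_op_matE:
  assumes fin: "finite B" and ev: "eigenvalue (op_mat B A) \<mu>"
  obtains \<psi> b0 where "\<And>c. c \<in> B \<Longrightarrow> (\<Sum>b\<in>B. A c b * \<psi> b) = \<mu> * \<psi> c"
    and "b0 \<in> B" and "\<psi> b0 \<noteq> 0"
proof -
  let ?e = "op_mat_enum B"
  have bij: "bij_betw ?e {..<card B} B" by (rule bij_betw_op_mat_enum[OF fin])
  obtain v where cv: "v \<in> carrier_vec (card B)" and Mv: "op_mat B A *\<^sub>v v = \<mu> \<cdot>\<^sub>v v"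
    and nz: "v \<noteq> 0\<^sub>v (card B)"
    using ev unfolding eigenvalue_def eigenvector_def dim_row_op_mat by blast
  have dv: "dim_vec v = card B" using cv by (rule carrier_vecD)
  define \<psi> where "\<psi> b = v $ (the_inv_into {..<card B} ?e b)" for b
  have \<psi>_e: "\<psi> (?e j) = v $ j" if "j < card B" for j
    using that bij unfolding \<psi>_def by (simp add: bij_betw_def the_inv_into_f_f)
  have eq: "(\<Sum>b\<in>B. A c b * \<psi> b) = \<mu> * \<psi> c" if c: "c \<in> B" for c
  proof -
    obtain i where i: "i < card B" "?e i = c"
      using bij c unfolding bij_betw_def by (metis imageE lessThan_iff)
    have "(\<Sum>b\<in>B. A c b * \<psi> b) = (\<Sum>j<card B. A c (?e j) * \<psi> (?e j))"
      by (rule sum.reindex_bij_betw[OF bij, symmetric])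
    also have "\<dots> = (op_mat B A *\<^sub>v v) $ i"
      using op_mat_mult_vec_index[OF i(1) dv] i \<psi>_e by simp
    also have "\<dots> = \<mu> * \<psi> c" using Mv dv i(1) \<psi>_e[OF i(1), unfolded i(2)] by simp
    finally show ?thesis .
  qed
  obtain i where i: "i < card B" "v $ i \<noteq> 0"
    using nz dv by (metis eq_vecI index_zero_vec(1,2))
  show ?thesis
  proof (rule that[OF eq])
    show "?e i \<in> B" using bij i(1) by (auto dest: bij_betwE)
    show "\<psi> (?e i) \<noteq> 0" using \<psi>_e i by simp
  qed
qed

lemma finite_real_eigenvalues:
  assumes "M \<in> carrier_mat N N"
  shows "finite {e. eigenvalue M (complex_of_real e)}"
proof -
  have "{e. eigenvalue M (complex_of_real e)} \<subseteq> Re ` spectrum M"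
    unfolding spectrum_def by (auto intro!: image_eqI[where x = "complex_of_real _"])
  thus ?thesis using card_finite_spectrum(1)[OF assms] finite_subset by blast
qed

lemma E0_le_eigenvalue:
  assumes "M \<in> carrier_mat N N" and "eigenvalue M (complex_of_real e)"
  shows "E0 M \<le> e"
  unfolding E0_def using assms by (intro Min_le finite_real_eigenvalues) auto

text \<open>The Rayleigh quotient \<open>v\<^sup>* M v / v\<^sup>* v\<close> of an eigenvector is its eigenvalue, and it is
  real for Hermitian \<open>M\<close>.\<close>

lemma hermitian_eigenvalue_real:
  assumes M: "M \<in> carrier_mat N N"
    and herm: "\<And>i j. i < N \<Longrightarrow> j < N \<Longrightarrow> M $$ (i, j) = cnj (M $$ (j, i))"
    and ev: "eigenvector M v k"
  shows "cnj k = k"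
proof -
  have dv: "dim_vec v = N" and Mv: "M *\<^sub>v v = k \<cdot>\<^sub>v v" and nz: "v \<noteq> 0\<^sub>v N"
    using ev M unfolding eigenvector_def by auto
  have Mv_index: "(M *\<^sub>v v) $ i = (\<Sum>j<N. M $$ (i, j) * v $ j)" if "i < N" for i
    using that M dv by (auto simp: mult_mat_vec_def scalar_prod_def atLeast0LessThan)
  define s where "s = (\<Sum>i<N. \<Sum>j<N. cnj (v $ i) * M $$ (i, j) * v $ j)"
  define nv where "nv = (\<Sum>i<N. (cmod (v $ i))\<^sup>2)"
  have s_eq: "s = k * complex_of_real nv"
  proof -
    have "s = (\<Sum>i<N. cnj (v $ i) * (M *\<^sub>v v) $ i)"
      unfolding s_def by (rule sum.cong) (simp_all add: Mv_index sum_distrib_left mult.assoc)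
    also have "\<dots> = (\<Sum>i<N. k * complex_of_real ((cmod (v $ i))\<^sup>2))"
    proof (rule sum.cong)
      fix i assume "i \<in> {..<N}"
      have "cnj (v $ i) * v $ i = complex_of_real ((cmod (v $ i))\<^sup>2)"
        by (subst complex_norm_square) (rule mult.commute)
      thus "cnj (v $ i) * (M *\<^sub>v v) $ i = k * complex_of_real ((cmod (v $ i))\<^sup>2)"
        using \<open>i \<in> {..<N}\<close> by (simp add: Mv dv)
    qed simp
    finally show ?thesis unfolding nv_def of_real_sum sum_distrib_left .
  qed
  have "cnj s = s"
  proof -
    have cnj_M: "cnj (M $$ (i, j)) = M $$ (j, i)" if "i < N" "j < N" for i j
      using herm[OF that(2,1)] by simp
    have "cnj s = (\<Sum>i<N. \<Sum>j<N. v $ i * M $$ (j, i) * cnj (v $ j))"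
      unfolding s_def by (simp add: cnj_M)
    also have "\<dots> = s"
      unfolding s_def by (subst sum.swap) (intro sum.cong refl, simp add: algebra_simps)
    finally show ?thesis .
  qed
  moreover have "nv > 0"
  proof -
    obtain i where i: "i < N" "v $ i \<noteq> 0" using nz dv by (metis eq_vecI index_zero_vec(1,2))
    have "(cmod (v $ i))\<^sup>2 \<le> nv" unfolding nv_def by (rule member_le_sum) (use i in auto)
    moreover have "(cmod (v $ i))\<^sup>2 > 0" using i by simp
    ultimately show ?thesis by linarith
  qed
  ultimately have "cnj k * complex_of_real nv = k * complex_of_real nv"
    using s_eq by (metis complex_cnj_complex_of_real complex_cnj_mult)
  thus ?thesis using \<open>nv > 0\<close> by simp
qed

lemma eigenvalue_E0:
  assumes M: "M \<in> carrier_mat N N" and N: "N > 0"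
    and herm: "\<And>i j. i < N \<Longrightarrow> j < N \<Longrightarrow> M $$ (i, j) = cnj (M $$ (j, i))"
  shows "eigenvalue M (complex_of_real (E0 M))"
proof -
  obtain k where "k \<in> spectrum M" using spectrum_non_empty[OF M N] by blast
  then obtain v where ev: "eigenvector M v k" unfolding spectrum_def eigenvalue_def by auto
  have "k = complex_of_real (Re k)"
    using hermitian_eigenvalue_real[OF M herm ev] by (metis Reals_cnj_iff of_real_Re)
  hence "eigenvalue M (complex_of_real (Re k))" using ev unfolding eigenvalue_def by metis
  hence "{e. eigenvalue M (complex_of_real e)} \<noteq> {}" by blast
  thus ?thesis using Min_in[OF finite_real_eigenvalues[OF M]] unfolding E0_def by simp
qed

lemma finite_configs: "finite S \<Longrightarrow> finite Loc \<Longrightarrow> finite (configs S Loc)"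
  unfolding configs_def by (rule finite_PiE) auto

lemma configs_agreeing_off_two:
  assumes c: "c \<in> configs S Loc" and x: "x \<in> S" and y: "y \<in> S"
  shows "{c' \<in> configs S Loc. \<forall>w\<in>S - {x, y}. c w = c' w}
       = (\<lambda>(a, b). c(x := a, y := b)) ` (Loc \<times> Loc)"
proof (intro equalityI subsetI)
  fix c' assume "c' \<in> {c' \<in> configs S Loc. \<forall>w\<in>S - {x, y}. c w = c' w}"
  hence c': "c' \<in> configs S Loc" "\<forall>w\<in>S - {x, y}. c w = c' w" by auto
  have "c' = c(x := c' x, y := c' y)"
  proof
    fix w show "c' w = (c(x := c' x, y := c' y)) w"
      using c c' x y by (cases "w \<in> S") (auto simp: configs_def PiE_def extensional_def)
  qed
  moreover have "c' x \<in> Loc" "c' y \<in> Loc" using c' x y by (auto simp: configs_def)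
  ultimately show "c' \<in> (\<lambda>(a, b). c(x := a, y := b)) ` (Loc \<times> Loc)"
    by (auto intro!: image_eqI[where x = "(c' x, c' y)"])
next
  fix c' assume "c' \<in> (\<lambda>(a, b). c(x := a, y := b)) ` (Loc \<times> Loc)"
  then obtain a b where "a \<in> Loc" "b \<in> Loc" "c' = c(x := a, y := b)" by auto
  thus "c' \<in> {c' \<in> configs S Loc. \<forall>w\<in>S - {x, y}. c w = c' w}"
    using c x y by (auto simp: configs_def PiE_def extensional_def Pi_def)
qed

lemma sum_embed2:
  assumes finS: "finite S" and finL: "finite Loc" and c: "c \<in> configs S Loc"
    and x: "x \<in> S" and y: "y \<in> S" and xy: "x \<noteq> y"
  shows "(\<Sum>c'\<in>configs S Loc. embed2 S x y t c c' * g c')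
       = (\<Sum>a\<in>Loc. \<Sum>b\<in>Loc. t (c x) (c y) a b * g (c(x := a, y := b)))"
proof -
  let ?upd = "\<lambda>(a, b). c(x := a, y := b)"
  have inj: "inj_on ?upd (Loc \<times> Loc)"
  proof (rule inj_onI, clarsimp)
    fix a b a' b' assume "c(x := a, y := b) = c(x := a', y := b')"
    from fun_cong[OF this, of x] fun_cong[OF this, of y] show "a = a' \<and> b = b'" using xy by auto
  qed
  have "(\<Sum>c'\<in>configs S Loc. embed2 S x y t c c' * g c')
      = (\<Sum>c'\<in>configs S Loc. if \<forall>w\<in>S - {x, y}. c w = c' w then t (c x) (c y) (c' x) (c' y) * g c' else 0)"
    by (rule sum.cong) (simp_all add: embed2_def)
  also have "\<dots> = (\<Sum>c'\<in>{c' \<in> configs S Loc. \<forall>w\<in>S - {x, y}. c w = c' w}. t (c x) (c y) (c' x) (c' y) * g c')"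
    by (rule sum.inter_filter[OF finite_configs[OF finS finL], symmetric])
  also have "\<dots> = (\<Sum>(a, b)\<in>Loc \<times> Loc. t (c x) (c y) a b * g (c(x := a, y := b)))"
    unfolding configs_agreeing_off_two[OF c x y] sum.reindex[OF inj]
    using xy by (intro sum.cong refl) auto
  finally show ?thesis by (simp add: sum.cartesian_product)
qed

lemma sum_ham_graph:
  assumes finS: "finite S" and finL: "finite L" and q: "q \<in> configs S L"
    and f: "\<And>u. u \<in> S \<Longrightarrow> f u \<in> S \<and> f u \<noteq> u"
  shows "(\<Sum>q'\<in>configs S L. ham S {(u, w). u \<in> S \<and> w = f u} t q q' * g q')
       = (\<Sum>u\<in>S. \<Sum>a\<in>L. \<Sum>b\<in>L. t (q u) (q (f u)) a b * g (q(u := a, f u := b)))"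
proof -
  have pairs: "{(u, w). u \<in> S \<and> w = f u} = (\<lambda>u. (u, f u)) ` S" by auto
  have "(\<Sum>q'\<in>configs S L. ham S {(u, w). u \<in> S \<and> w = f u} t q q' * g q')
      = (\<Sum>q'\<in>configs S L. \<Sum>u\<in>S. embed2 S u (f u) t q q' * g q')"
    unfolding ham_def pairs sum_distrib_right by (simp add: sum.reindex inj_on_def)
  also have "\<dots> = (\<Sum>u\<in>S. \<Sum>q'\<in>configs S L. embed2 S u (f u) t q q' * g q')"
    by (rule sum.swap)
  also have "\<dots> = (\<Sum>u\<in>S. \<Sum>a\<in>L. \<Sum>b\<in>L. t (q u) (q (f u)) a b * g (q(u := a, f u := b)))"
    using f by (intro sum.cong refl sum_embed2[OF finS finL q]) (simp_all, metis)
  finally show ?thesis .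
qed

lemma ham_hermitian:
  assumes t: "\<And>a b a' b'. a \<in> L \<Longrightarrow> b \<in> L \<Longrightarrow> a' \<in> L \<Longrightarrow> b' \<in> L \<Longrightarrow>
      t a b a' b' = cnj (t a' b' a b)"
    and P: "P \<subseteq> S \<times> S" and c: "c \<in> configs S L" and c': "c' \<in> configs S L"
  shows "ham S P t c c' = cnj (ham S P t c' c)"
  unfolding ham_def cnj_sum
proof (rule sum.cong[OF refl], clarify)
  fix u v assume "(u, v) \<in> P"
  hence inL: "c u \<in> L" "c v \<in> L" "c' u \<in> L" "c' v \<in> L" using P c c' by (auto simp: configs_def)
  have "(\<forall>w\<in>S - {u, v}. c w = c' w) = (\<forall>w\<in>S - {u, v}. c' w = c w)"
    by (simp add: eq_commute)
  thus "embed2 S u v t c c' = cnj (embed2 S u v t c' c)"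
    unfolding embed2_def using t[OF inL] by simp
qed

lemma UNIV_reg: "(UNIV :: reg set) = {T1, T2, S1, S2, T1', T2', S1', S2', Q}"
  using reg.exhaust by auto

lemma finite_UNIV_reg [simp]: "finite (UNIV :: reg set)"
  by (simp add: UNIV_reg)

lemma finite_loc [simp]: "finite (loc D)"
  unfolding loc_def by (rule finite_PiE) auto

lemma loc_lessD: "a \<in> loc D \<Longrightarrow> a R < reg_dim D R"
  by (auto simp: loc_def)

lemma reg_dim_simps [simp]:
  "reg_dim D T1 = 3" "reg_dim D T2 = 3" "reg_dim D S1 = 2" "reg_dim D S2 = 2"
  "reg_dim D T1' = 3" "reg_dim D T2' = 3" "reg_dim D S1' = 2" "reg_dim D S2' = 2" "reg_dim D Q = D"
  by (simp_all add: reg_dim_def)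

lemma sum_loc_fun_upd:
  assumes a0: "a0 \<in> loc D"
  shows "(\<Sum>a\<in>loc D. if \<forall>R'. R' \<noteq> R \<longrightarrow> a0 R' = a R' then F a else 0)
       = (\<Sum>\<alpha><reg_dim D R. F (a0(R := \<alpha>)))"
proof -
  have "{a \<in> loc D. \<forall>R'. R' \<noteq> R \<longrightarrow> a0 R' = a R'} = (\<lambda>\<alpha>. a0(R := \<alpha>)) ` {..<reg_dim D R}"
  proof (intro equalityI subsetI)
    fix a assume a: "a \<in> {a \<in> loc D. \<forall>R'. R' \<noteq> R \<longrightarrow> a0 R' = a R'}"
    hence "a = a0(R := a R)" by (auto simp: fun_eq_iff)
    moreover have "a R < reg_dim D R" using a by (auto simp: loc_def)
    ultimately show "a \<in> (\<lambda>\<alpha>. a0(R := \<alpha>)) ` {..<reg_dim D R}" by blast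
  qed (use a0 in \<open>auto simp: loc_def\<close>)
  moreover have "inj_on (\<lambda>\<alpha>. a0(R := \<alpha>)) {..<reg_dim D R}"
    by (rule inj_onI) (metis fun_upd_same)
  ultimately show ?thesis by (simp add: sum.inter_filter[symmetric] sum.reindex)
qed

lemma if_conj_mult:
  "(if P1 \<and> P2 then x else 0) * (y::'a::mult_zero) = (if P1 then if P2 then x * y else 0 else 0)"
  by simp

lemma if_sum_out: "(\<Sum>b\<in>B. if P then g b else 0) = (if P then \<Sum>b\<in>B. g b else 0)"
  by simp

lemma sum_acts:
  "(\<Sum>a\<in>A. \<Sum>b\<in>B. acts Ru Rv f a0 b0 a b * G a b)
   = (\<Sum>a\<in>A. if \<forall>R. R \<notin> Ru \<longrightarrow> a0 R = a R then
        \<Sum>b\<in>B. if \<forall>R. R \<notin> Rv \<longrightarrow> b0 R = b R then f a0 b0 a b * G a b else 0 else 0)"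
proof (rule sum.cong[OF refl])
  fix a
  let ?P = "\<forall>R. R \<notin> Ru \<longrightarrow> a0 R = a R"
  have "acts Ru Rv f a0 b0 a b * G a b
      = (if ?P then if \<forall>R. R \<notin> Rv \<longrightarrow> b0 R = b R then f a0 b0 a b * G a b else 0 else 0)" for b
    unfolding acts_def by (rule if_conj_mult)
  thus "(\<Sum>b\<in>B. acts Ru Rv f a0 b0 a b * G a b)
      = (if ?P then \<Sum>b\<in>B. if \<forall>R. R \<notin> Rv \<longrightarrow> b0 R = b R then f a0 b0 a b * G a b else 0 else 0)"
    by (simp only: if_sum_out)
qed

lemma sum_acts_empty:
  assumes "a0 \<in> loc D" and "b0 \<in> loc D"
  shows "(\<Sum>a\<in>loc D. \<Sum>b\<in>loc D. acts {} {} f a0 b0 a b * G a b) = f a0 b0 a0 b0 * G a0 b0"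
proof -
  have "(\<forall>R. a0 R = a R) = (a0 = a)" "(\<forall>R. b0 R = b R) = (b0 = b)" for a b
    by (auto simp: fun_eq_iff)
  thus ?thesis unfolding sum_acts using assms by simp
qed

lemma sum_acts_single:
  assumes a0: "a0 \<in> loc D" and b0: "b0 \<in> loc D"
  shows "(\<Sum>a\<in>loc D. \<Sum>b\<in>loc D. acts {R1} {R2} f a0 b0 a b * G a b)
       = (\<Sum>\<alpha><reg_dim D R1. \<Sum>\<beta><reg_dim D R2.
            f a0 b0 (a0(R1 := \<alpha>)) (b0(R2 := \<beta>)) * G (a0(R1 := \<alpha>)) (b0(R2 := \<beta>)))"
proof -
  have "(\<Sum>a\<in>loc D. \<Sum>b\<in>loc D. acts {R1} {R2} f a0 b0 a b * G a b)
      = (\<Sum>a\<in>loc D. if \<forall>R. R \<noteq> R1 \<longrightarrow> a0 R = a R then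
           \<Sum>b\<in>loc D. if \<forall>R. R \<noteq> R2 \<longrightarrow> b0 R = b R then f a0 b0 a b * G a b else 0 else 0)"
    unfolding sum_acts by (simp only: singleton_iff)
  also have "\<dots> = (\<Sum>\<alpha><reg_dim D R1. \<Sum>\<beta><reg_dim D R2.
            f a0 b0 (a0(R1 := \<alpha>)) (b0(R2 := \<beta>)) * G (a0(R1 := \<alpha>)) (b0(R2 := \<beta>)))"
    by (simp only: sum_loc_fun_upd[OF a0] sum_loc_fun_upd[OF b0])
  finally show ?thesis .
qed

lemma less_3_cases: "(k::nat) < 3 \<Longrightarrow> k = 0 \<or> k = 1 \<or> k = 2"
  by auto

lemma A_gen_eq_0: "b0 N \<noteq> (a0 N + 1) mod 3 \<Longrightarrow> A_gen N Sa Sb a0 b0 a b = 0"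
  by (simp add: A_gen_def acts_def)

lemma swap_A_gen_eq_0: "a0 N \<noteq> (b0 N + 1) mod 3 \<Longrightarrow> swap_term (A_gen N Sa Sb) a0 b0 a b = 0"
  by (simp add: A_gen_def acts_def swap_term_def)

lemma h_RI_gen_eq_0: "a0 N = b0 N \<Longrightarrow> a0 N < 3 \<Longrightarrow> h_RI_gen D N M a0 b0 a b = 0"
  unfolding h_RI_gen_def acts_def by (drule less_3_cases) auto

text \<open>\<open>A\<close> annihilates the EPR pair \<open>|00\<rangle> + |11\<rangle>\<close> on the qubits \<open>Sb\<close> of the first and \<open>Sa\<close> of the
  second site.\<close>

lemma sum_A_gen_EPR:
  assumes a0: "a0 \<in> loc D" and b0: "b0 \<in> loc D"
    and da: "reg_dim D Sa = 2" and db: "reg_dim D Sb = 2"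
    and up: "b0 N = (a0 N + 1) mod 3"
    and G: "\<And>\<alpha> \<beta>. \<alpha> < 2 \<Longrightarrow> \<beta> < 2 \<Longrightarrow> G (a0(Sb := \<alpha>)) (b0(Sa := \<beta>)) = (if \<alpha> = \<beta> then K else 0)"
  shows "(\<Sum>a\<in>loc D. \<Sum>b\<in>loc D. A_gen N Sa Sb a0 b0 a b * G a b) = 0"
proof -
  have "(\<Sum>a\<in>loc D. \<Sum>b\<in>loc D. A_gen N Sa Sb a0 b0 a b * G a b)
      = (\<Sum>\<alpha><2. \<Sum>\<beta><2. 16 * ((1/2) * ((if a0 Sb = \<alpha> \<and> b0 Sa = \<beta> then 1 else 0)
                      - (if a0 Sb = b0 Sa \<and> \<alpha> = \<beta> then 1/2 else 0))) * (if \<alpha> = \<beta> then K else 0))"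
    unfolding A_gen_def sum_acts_single[OF a0 b0] da db
    by (intro sum.cong refl) (simp add: up G)
  also have "\<dots> = 0"
  proof -
    have "a0 Sb < 2" "b0 Sa < 2" using loc_lessD[OF a0, of Sb] loc_lessD[OF b0, of Sa] da db by auto
    hence "a0 Sb = 0 \<or> a0 Sb = 1" "b0 Sa = 0 \<or> b0 Sa = 1" by auto
    thus ?thesis by (auto simp: numeral_2_eq_2 lessThan_Suc)
  qed
  finally show ?thesis .
qed

lemma sum_h_RI_gen:
  assumes a0: "a0 \<in> loc D" and b0: "b0 \<in> loc D"
    and up: "b0 N = (a0 N + 1) mod 3" and "a0 N < 3"
  shows "(\<Sum>a\<in>loc D. \<Sum>b\<in>loc D. h_RI_gen D N M a0 b0 a b * G a b)
     = (\<Sum>\<alpha><D. \<Sum>\<beta><D. entry2 D M (a0 Q) (b0 Q) \<alpha> \<beta> * G (a0(Q := \<alpha>)) (b0(Q := \<beta>)))"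
proof -
  have "Suc (a0 N) mod 3 \<noteq> Suc (Suc (a0 N)) mod 3" using less_3_cases[OF \<open>a0 N < 3\<close>] by auto
  thus ?thesis
    unfolding h_RI_gen_def sum_acts_single[OF a0 b0] reg_dim_simps
    by (intro sum.cong refl) (simp add: up)
qed

definition same_classical :: "(reg \<Rightarrow> nat) \<Rightarrow> (reg \<Rightarrow> nat) \<Rightarrow> bool" where
  "same_classical a a' \<longleftrightarrow> a T1 = a' T1 \<and> a T2 = a' T2 \<and> a T1' = a' T1' \<and> a T2' = a' T2'"

lemma acts_eq_0_unless_same_classical:
  assumes "\<not> (same_classical a0 a \<and> same_classical b0 b)"
    and "T1 \<notin> Ru" "T2 \<notin> Ru" "T1' \<notin> Ru" "T2' \<notin> Ru" "T1 \<notin> Rv" "T2 \<notin> Rv" "T1' \<notin> Rv" "T2' \<notin> Rv"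
  shows "acts Ru Rv f a0 b0 a b = 0" "acts Rv Ru f b0 a0 b a = 0"
  using assms unfolding acts_def same_classical_def by metis+

lemma h_full_eq_0_unless_same_classical:
  assumes nc: "\<not> (same_classical a0 a \<and> same_classical b0 b)"
  shows "h_full D hTI vTI a0 b0 a b = 0"
proof -
  note acts_0 = acts_eq_0_unless_same_classical[OF nc]
  have "h_tile_gen C N a0 b0 a b = 0" "h_loop_gen C a0 b0 a b = 0" "h_copy a0 b0 a b = 0"
    "h_RI_gen D N M a0 b0 a b = 0" for C N M
    unfolding h_tile_gen_def h_loop_gen_def h_copy_def h_RI_gen_def by (rule acts_0(1); simp)+
  moreover have "A_gen T2 S1 S2 a0 b0 a b = 0" "A_gen T2' S1' S2' a0 b0 a b = 0"
    unfolding A_gen_def by (rule acts_0(1); simp)+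
  moreover have "swap_term (A_gen T2 S1 S2) a0 b0 a b = 0" "swap_term (A_gen T2' S1' S2') a0 b0 a b = 0"
    unfolding A_gen_def swap_term_def by (rule acts_0(2); simp)+
  ultimately show ?thesis unfolding h_full_def h_EPR_gen_def by (simp only: add_0)
qed

lemma h_RI_gen_swap_sites:
  assumes "a N < 3" "b N < 3"
  shows "h_RI_gen D N M a b a' b' = h_RI_gen D N M b a b' a'"
proof -
  have up: "(b N = (a N + 1) mod 3) = (a N = (b N + 2) mod 3)"
    and down: "(b N = (a N + 2) mod 3) = (a N = (b N + 1) mod 3)"
    using less_3_cases[OF assms(1)] less_3_cases[OF assms(2)] by auto
  have "(if P1 \<and> P2 then x + y else 0) = (if P2 \<and> P1 then y + x else (0::complex))"
    for P1 P2 x y by auto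
  thus ?thesis unfolding h_RI_gen_def acts_def up down .
qed

lemma h_full_swap_sites:
  assumes a: "a \<in> loc D" and b: "b \<in> loc D"
  shows "h_full D hTI vTI a b a' b' = h_full D hTI vTI b a b' a'"
proof -
  have "h_tile_gen C N a b a' b' = h_tile_gen C N b a b' a'" for C N
    unfolding h_tile_gen_def acts_def tileV_def by auto
  moreover have "h_loop_gen C a b a' b' = h_loop_gen C b a b' a'" for C
    unfolding h_loop_gen_def acts_def by auto
  moreover have "h_copy a b a' b' = h_copy b a b' a'"
    unfolding h_copy_def acts_def by auto
  moreover have "h_EPR_gen N Sa Sb a b a' b' = h_EPR_gen N Sa Sb b a b' a'" for N Sa Sb
    unfolding h_EPR_gen_def swap_term_def by simp
  moreover have "h_RI_gen D N M a b a' b' = h_RI_gen D N M b a b' a'" if "N \<in> {T2, T2'}" for N M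
    using that loc_lessD[OF a, of N] loc_lessD[OF b, of N] by (auto intro!: h_RI_gen_swap_sites)
  ultimately show ?thesis unfolding h_full_def by simp
qed

lemma sum_h_full_split:
  "(\<Sum>a\<in>A. \<Sum>b\<in>B. h_full D hTI vTI a0 b0 a b * G a b) =
     (\<Sum>a\<in>A. \<Sum>b\<in>B. h_tile_gen T1 T2 a0 b0 a b * G a b)
   + (\<Sum>a\<in>A. \<Sum>b\<in>B. A_gen T2 S1 S2 a0 b0 a b * G a b)
   + (\<Sum>a\<in>A. \<Sum>b\<in>B. swap_term (A_gen T2 S1 S2) a0 b0 a b * G a b)
   + (\<Sum>a\<in>A. \<Sum>b\<in>B. h_loop_gen T1 a0 b0 a b * G a b)
   + (\<Sum>a\<in>A. \<Sum>b\<in>B. h_tile_gen T1' T2' a0 b0 a b * G a b)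
   + (\<Sum>a\<in>A. \<Sum>b\<in>B. A_gen T2' S1' S2' a0 b0 a b * G a b)
   + (\<Sum>a\<in>A. \<Sum>b\<in>B. swap_term (A_gen T2' S1' S2') a0 b0 a b * G a b)
   + (\<Sum>a\<in>A. \<Sum>b\<in>B. h_loop_gen T1' a0 b0 a b * G a b)
   + (\<Sum>a\<in>A. \<Sum>b\<in>B. h_copy a0 b0 a b * G a b)
   + (\<Sum>a\<in>A. \<Sum>b\<in>B. h_RI_gen D T2 hTI a0 b0 a b * G a b)
   + (\<Sum>a\<in>A. \<Sum>b\<in>B. h_RI_gen D T2' vTI a0 b0 a b * G a b)"
  unfolding h_full_def h_EPR_gen_def by (simp only: distrib_right sum.distrib add.assoc)

lemma sum_classical_terms:
  assumes a0: "a0 \<in> loc D" and b0: "b0 \<in> loc D"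
  shows "(\<Sum>a\<in>loc D. \<Sum>b\<in>loc D. h_tile_gen C N a0 b0 a b * G a b)
           = (if tileV (a0 C, a0 N) (b0 C, b0 N) then 8 else 0) * G a0 b0"
    and "(\<Sum>a\<in>loc D. \<Sum>b\<in>loc D. h_loop_gen C a0 b0 a b * G a b)
           = (if a0 C \<noteq> b0 C then 2 else 0) * G a0 b0"
    and "(\<Sum>a\<in>loc D. \<Sum>b\<in>loc D. h_copy a0 b0 a b * G a b)
           = (if a0 T1 = b0 T1 \<and> a0 T1' = b0 T1' then 1 else 0) * G a0 b0"
  unfolding h_tile_gen_def h_loop_gen_def h_copy_def sum_acts_empty[OF a0 b0] by simp_all

section \<open>Nearest-neighbour bonds of the torus\<close>

lemma add_one_mod_neq:
  fixes a n :: nat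
  assumes "a < n" "2 \<le> n"
  shows "(a + 1) mod n \<noteq> a"
proof (cases "a + 1 < n")
  case False
  hence "a + 1 = n" using assms by simp
  thus ?thesis using assms by auto
qed simp

lemma add_one_mod_twice_neq:
  fixes a n :: nat
  assumes "a < n" "3 \<le> n"
  shows "((a + 1) mod n + 1) mod n \<noteq> a"
proof -
  consider "a + 2 < n" | "a + 2 = n" | "a + 1 = n" using assms(1) by linarith
  thus ?thesis using assms(2) by cases auto
qed

lemma add_one_mod_inj: "a < n \<Longrightarrow> b < n \<Longrightarrow> (a + 1) mod n = (b + 1) mod n \<Longrightarrow> a = (b::nat)"
  by (cases "a + 1 = n"; cases "b + 1 = n") auto

lemma cyclic_dist_eq_1:
  fixes a b n :: nat
  assumes "a < n" "b < n" and "min \<bar>int a - int b\<bar> (int n - \<bar>int a - int b\<bar>) = 1"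
  shows "b = (a + 1) mod n \<or> a = (b + 1) mod n"
proof -
  have "\<bar>int a - int b\<bar> = 1 \<or> int n - \<bar>int a - int b\<bar> = 1" using assms(3) by linarith
  hence "b = a + 1 \<or> a = b + 1 \<or> (a = 0 \<and> b = n - 1) \<or> (b = 0 \<and> a = n - 1)"
    using assms(1,2) by linarith
  thus ?thesis using assms(1,2) by auto
qed

locale torus =
  fixes n r :: nat
  assumes n_ge_3: "n \<ge> 3"
begin

definition shift :: "nat \<Rightarrow> (nat \<Rightarrow> nat) \<Rightarrow> nat \<Rightarrow> nat" where
  "shift j x = x(j := (x j + 1) mod n)"

lemma shift_apply: "shift j x i = (if i = j then (x j + 1) mod n else x i)"
  by (simp add: shift_def)

lemma lattice_iff: "x \<in> lattice r n \<longleftrightarrow> (\<forall>i<r. x i < n) \<and> (\<forall>i. i \<ge> r \<longrightarrow> x i = undefined)"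
  unfolding lattice_def PiE_def extensional_def Pi_def by auto

lemma lattice_eqI:
  "x \<in> lattice r n \<Longrightarrow> y \<in> lattice r n \<Longrightarrow> (\<And>i. i < r \<Longrightarrow> x i = y i) \<Longrightarrow> x = y"
  unfolding lattice_iff by (metis not_le ext)

lemma shift_in_lattice: "x \<in> lattice r n \<Longrightarrow> j < r \<Longrightarrow> shift j x \<in> lattice r n"
  unfolding lattice_iff shift_def using n_ge_3 by auto

lemma shift_neq:
  assumes x: "x \<in> lattice r n" and j: "j < r"
  shows "shift j x \<noteq> x"
proof
  assume "shift j x = x"
  hence "(x j + 1) mod n = x j" unfolding shift_def by (metis fun_upd_same)
  thus False using add_one_mod_neq[of "x j" n] x j n_ge_3 unfolding lattice_iff by auto
qed

lemma shift_inj: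
  assumes x: "x \<in> lattice r n" and y: "y \<in> lattice r n" and e: "shift j x = shift j y"
  shows "x = y"
proof
  fix i show "x i = y i"
  proof (cases "i = j")
    case True
    have "(x j + 1) mod n = (y j + 1) mod n" using e by (metis shift_apply)
    thus ?thesis using True x y add_one_mod_inj[of "x j" n "y j"] unfolding lattice_iff
      by (metis not_le)
  next
    case False thus ?thesis using e by (metis shift_apply)
  qed
qed

lemma lee_commute: "lee r n x y = lee r n y x"
  unfolding lee_def by (simp add: abs_minus_commute)

lemma lee_shift:
  assumes x: "x \<in> lattice r n" and j: "j < r"
  shows "lee r n x (shift j x) = 1"
proof -
  define d where "d i = min \<bar>int (x i) - int (shift j x i)\<bar> (int n - \<bar>int (x i) - int (shift j x i)\<bar>)"
    for i
  have "d i = 0" if "i \<noteq> j" for i using that by (simp add: d_def shift_apply)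
  moreover have "d j = 1"
  proof (cases "x j + 1 < n")
    case True thus ?thesis using n_ge_3 by (simp add: d_def shift_apply)
  next
    case False
    hence "x j = n - 1" using x j unfolding lattice_iff by auto
    thus ?thesis using n_ge_3 by (simp add: d_def shift_apply of_nat_diff)
  qed
  ultimately have "(\<Sum>i<r. d i) = 1" using j by (simp add: sum.remove)
  thus ?thesis unfolding lee_def d_def .
qed

lemma lee_eq_1_shift:
  assumes x: "x \<in> lattice r n" and y: "y \<in> lattice r n" and lee: "lee r n x y = 1"
  obtains j where "j < r" "y = shift j x \<or> x = shift j y"
proof -
  define d where "d i = min \<bar>int (x i) - int (y i)\<bar> (int n - \<bar>int (x i) - int (y i)\<bar>)" for i
  have xy: "x i < n" "y i < n" if "i < r" for i using x y that unfolding lattice_iff by auto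
  have d_nonneg: "d i \<ge> 0" if "i < r" for i using xy[OF that] unfolding d_def by auto
  have d_0: "d i = 0 \<Longrightarrow> x i = y i" if "i < r" for i using xy[OF that] unfolding d_def by auto
  have sum_d: "(\<Sum>i<r. d i) = 1" using lee unfolding lee_def d_def by simp
  then obtain j where j: "j < r" "d j \<noteq> 0" by (metis (no_types, lifting) lessThan_iff sum.neutral zero_neq_one)
  have split: "(\<Sum>i<r. d i) = d j + (\<Sum>i\<in>{..<r} - {j}. d i)" using j by (simp add: sum.remove)
  have "(\<Sum>i\<in>{..<r} - {j}. d i) \<ge> 0" by (rule sum_nonneg) (auto intro: d_nonneg)
  hence dj: "d j = 1" and rest: "(\<Sum>i\<in>{..<r} - {j}. d i) = 0"
    using split sum_d d_nonneg[OF j(1)] j(2) by linarith+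
  have same: "x i = y i" if "i < r" "i \<noteq> j" for i
    using rest sum_nonneg_eq_0_iff[of "{..<r} - {j}" d] d_nonneg d_0 that by auto
  have "y j = (x j + 1) mod n \<or> x j = (y j + 1) mod n"
    using cyclic_dist_eq_1[OF xy[OF j(1)]] dj unfolding d_def by blast
  hence "y = shift j x \<or> x = shift j y"
    using lattice_eqI[OF y shift_in_lattice[OF x j(1)]] lattice_eqI[OF x shift_in_lattice[OF y j(1)]]
      same by (auto simp: shift_apply)
  thus ?thesis using that j(1) by blast
qed

lemma shift_bond_inj:
  assumes x: "x \<in> lattice r n" and j: "j < r" and e: "{x, shift j x} = {y, shift k y}"
  shows "x = y \<and> j = k"
proof -
  have xj: "x j < n" using x j unfolding lattice_iff by auto
  from e have "(x = y \<and> shift j x = shift k y) \<or> (x = shift k y \<and> shift j x = y)"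
    by (auto simp: doubleton_eq_iff)
  thus ?thesis
  proof
    assume h: "x = y \<and> shift j x = shift k y"
    have "j = k"
    proof (rule ccontr)
      assume "j \<noteq> k"
      hence "(x j + 1) mod n = x j" using h by (metis shift_apply)
      thus False using add_one_mod_neq[OF xj] n_ge_3 by auto
    qed
    thus ?thesis using h by auto
  next
    assume "x = shift k y \<and> shift j x = y"
    hence "x j = shift k (shift j x) j" by metis
    also have "\<dots> = (if j = k then ((x j + 1) mod n + 1) mod n else (x j + 1) mod n)"
      by (simp add: shift_apply)
    finally show ?thesis
      using add_one_mod_neq[OF xj] add_one_mod_twice_neq[OF xj n_ge_3] n_ge_3
      by (auto split: if_splits)
  qed
qed

definition orient_bond :: "(nat \<Rightarrow> nat) \<times> nat \<Rightarrow> (nat \<Rightarrow> nat) \<times> (nat \<Rightarrow> nat)" where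
  "orient_bond p = (let x = fst p; y = shift (snd p) x in
     if (SOME w. w \<in> {x, y}) = x then (x, y) else (y, x))"

lemma orient_bond_in_oriented_edges:
  assumes x: "x \<in> lattice r n" and j: "j < r"
  shows "orient_bond (x, j) \<in> oriented_edges r n"
proof -
  define y where "y = shift j x"
  have edge: "{x, y} \<in> edges r n" unfolding edges_def y_def
    using x shift_in_lattice[OF x j] lee_shift[OF x j] by blast
  have ne: "x \<noteq> y" using shift_neq[OF x j] y_def by auto
  have swap: "(SOME w. w \<in> {y, x}) = (SOME w. w \<in> {x, y})" by (metis insert_commute)
  have "(SOME w. w \<in> {x, y}) \<in> {x, y}" by (rule someI[of _ x]) simp
  hence "(SOME w. w \<in> {x, y}) = x \<or> (SOME w. w \<in> {x, y}) = y" by blast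
  thus ?thesis
  proof
    assume "(SOME w. w \<in> {x, y}) = x"
    thus ?thesis using edge ne unfolding orient_bond_def oriented_edges_def y_def by auto
  next
    assume some_y: "(SOME w. w \<in> {x, y}) = y"
    hence "orient_bond (x, j) = (y, x)" using ne unfolding y_def by (simp add: orient_bond_def)
    moreover have "{y, x} \<in> edges r n" using edge by (simp only: insert_commute)
    ultimately show ?thesis using ne swap some_y unfolding oriented_edges_def by auto
  qed
qed

lemma oriented_edges_orient_bond:
  assumes "e \<in> oriented_edges r n"
  shows "e \<in> orient_bond ` (lattice r n \<times> {..<r})"
proof -
  obtain u v where e: "e = (u, v)" and ed: "{u, v} \<in> edges r n"
    and some: "u = (SOME w. w \<in> {u, v})" and ne: "u \<noteq> v"
    using assms unfolding oriented_edges_def by auto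
  from ed have uv: "u \<in> lattice r n" "v \<in> lattice r n" "lee r n u v = 1"
    unfolding edges_def using lee_commute by (auto simp: doubleton_eq_iff)
  obtain j where j: "j < r" "v = shift j u \<or> u = shift j v" by (rule lee_eq_1_shift[OF uv])
  from j(2) show ?thesis
  proof
    assume "v = shift j u"
    hence "orient_bond (u, j) = e" using some e by (simp add: orient_bond_def)
    thus ?thesis using uv j(1) by force
  next
    assume "u = shift j v"
    moreover have "(SOME w. w \<in> {v, u}) = u" using some by (metis insert_commute)
    ultimately have "orient_bond (v, j) = e" using ne e by (simp add: orient_bond_def)
    thus ?thesis using uv j(1) by force
  qed
qed

lemma bij_betw_orient_bond: "bij_betw orient_bond (lattice r n \<times> {..<r}) (oriented_edges r n)"
proof -
  have ends: "{fst (orient_bond (x, j)), snd (orient_bond (x, j))} = {x, shift j x}" for x j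
    by (auto simp: orient_bond_def Let_def)
  have "inj_on orient_bond (lattice r n \<times> {..<r})"
  proof (rule inj_onI, clarsimp)
    fix x j y k assume x: "x \<in> lattice r n" and j: "j < r"
      and e: "orient_bond (x, j) = orient_bond (y, k)"
    have "{x, shift j x} = {y, shift k y}" using ends[of x j] ends[of y k] e by simp
    thus "x = y \<and> j = k" by (rule shift_bond_inj[OF x j])
  qed
  thus ?thesis unfolding bij_betw_def
    using orient_bond_in_oriented_edges oriented_edges_orient_bond by auto
qed

lemma sum_oriented_edges:
  assumes sym: "\<And>u v. u \<in> lattice r n \<Longrightarrow> v \<in> lattice r n \<Longrightarrow> g u v = g v u"
  shows "(\<Sum>(u, v)\<in>oriented_edges r n. g u v) = (\<Sum>x\<in>lattice r n. \<Sum>j<r. g x (shift j x))"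
proof -
  have "(\<Sum>(u, v)\<in>oriented_edges r n. g u v)
      = (\<Sum>p\<in>lattice r n \<times> {..<r}. case_prod g (orient_bond p))"
    by (rule sum.reindex_bij_betw[OF bij_betw_orient_bond, symmetric])
  also have "\<dots> = (\<Sum>p\<in>lattice r n \<times> {..<r}. g (fst p) (shift (snd p) (fst p)))"
  proof (rule sum.cong[OF refl])
    fix p assume p: "p \<in> lattice r n \<times> {..<r}"
    hence "shift (snd p) (fst p) \<in> lattice r n" using shift_in_lattice by auto
    thus "case_prod g (orient_bond p) = g (fst p) (shift (snd p) (fst p))"
      using p sym[of "fst p" "shift (snd p) (fst p)"] by (auto simp: orient_bond_def Let_def)
  qed
  finally show ?thesis by (simp add: sum.cartesian_product split_def)
qed

definition right_of :: "nat \<times> nat \<Rightarrow> nat \<times> nat" where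
  "right_of u = ((fst u + 1) mod n, snd u)"

definition up_of :: "nat \<times> nat \<Rightarrow> nat \<times> nat" where
  "up_of u = (fst u, (snd u + 1) mod n)"

lemma right_of_in_sq_sites: "u \<in> sq_sites n \<Longrightarrow> right_of u \<in> sq_sites n \<and> right_of u \<noteq> u"
  using add_one_mod_neq[of "fst u" n] n_ge_3 by (auto simp: right_of_def sq_sites_def prod_eq_iff)

lemma up_of_in_sq_sites: "u \<in> sq_sites n \<Longrightarrow> up_of u \<in> sq_sites n \<and> up_of u \<noteq> u"
  using add_one_mod_neq[of "snd u" n] n_ge_3 by (auto simp: up_of_def sq_sites_def prod_eq_iff)

end

lemma Suc_mod_3_neq: "Suc (k mod 3) mod 3 \<noteq> k mod (3::nat)"
  using less_3_cases[of "k mod 3"] by auto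

lemma Suc_Suc_mod_3_neq: "Suc (Suc (k mod 3)) mod 3 \<noteq> k mod (3::nat)"
  using less_3_cases[of "k mod 3"] by auto

lemma sum_two_then_four:
  "2 \<le> r \<Longrightarrow> (\<Sum>j<r. if j < 2 then 2 else 4 :: 'a::comm_ring_1) = 4 * (of_nat r - 1)"
proof (induction r rule: nat_induct_at_least)
  case base
  show ?case by (simp add: numeral_2_eq_2)
next
  case (Suc m)
  thus ?case by (simp add: algebra_simps)
qed

locale tiled_torus = torus +
  assumes three_dvd_n: "3 dvd n" and r_ge_2: "r \<ge> 2"
begin

lemma zero_less_r: "0 < r" and one_less_r: "1 < r"
  using r_ge_2 by auto

definition colour :: "nat \<Rightarrow> (nat \<Rightarrow> nat) \<Rightarrow> nat" where
  "colour i x = (\<Sum>k\<in>{..<r} - {i}. x k) mod 3"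

definition number :: "nat \<Rightarrow> (nat \<Rightarrow> nat) \<Rightarrow> nat" where
  "number i x = x i mod 3"

lemma number_less_3 [simp]: "number i x < 3"
  by (simp add: number_def)

lemma colour_less_3 [simp]: "colour i x < 3"
  by (simp add: colour_def)

lemma colour_Suc_neq [simp]: "Suc (colour i x) mod 3 \<noteq> colour i x" "colour i x \<noteq> Suc (colour i x) mod 3"
  using Suc_mod_3_neq by (metis colour_def)+

lemma number_Suc_neq [simp]:
  "Suc (number i x) mod 3 \<noteq> number i x" "number i x \<noteq> Suc (number i x) mod 3"
  "Suc (Suc (number i x) mod 3) mod 3 \<noteq> number i x"
  "number i x \<noteq> Suc (Suc (number i x) mod 3) mod 3"
  using Suc_mod_3_neq[of "x i"] Suc_Suc_mod_3_neq[of "x i"] unfolding number_def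
  by (simp_all add: mod_simps)

lemma number_shift: "number i (shift j x) = (if i = j then Suc (number i x) mod 3 else number i x)"
  unfolding number_def shift_apply by (auto simp: mod_mod_cancel[OF three_dvd_n] mod_simps)

lemma colour_shift:
  assumes j: "j < r"
  shows "colour i (shift j x) = (if i = j then colour i x else Suc (colour i x) mod 3)"
proof (cases "i = j")
  case True
  have "(\<Sum>k\<in>{..<r} - {i}. shift j x k) = (\<Sum>k\<in>{..<r} - {i}. x k)"
    by (rule sum.cong) (auto simp: shift_apply True)
  thus ?thesis using True by (simp add: colour_def)
next
  case False
  let ?A = "{..<r} - {i}"
  define s where "s = (\<Sum>k\<in>?A - {j}. x k)"
  have jA: "j \<in> ?A" using j False by auto
  have "(\<Sum>k\<in>?A. shift j x k) = (x j + 1) mod n + s"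
    unfolding s_def using jA by (simp add: sum.remove shift_apply)
  moreover have "(\<Sum>k\<in>?A. x k) = x j + s"
    unfolding s_def using jA by (simp add: sum.remove)
  moreover have "((x j + 1) mod n + s) mod 3 = (x j + 1 + s) mod 3"
    by (metis mod_add_left_eq mod_mod_cancel[OF three_dvd_n])
  ultimately show ?thesis using False by (simp add: colour_def mod_simps)
qed

text \<open>The planes spanned by directions 0 and 1 are indexed by the remaining coordinates.\<close>

definition planes :: "(nat \<Rightarrow> nat) set" where
  "planes = PiE {2..<r} (\<lambda>_. {..<n})"

definition plane_point :: "nat \<times> nat \<Rightarrow> (nat \<Rightarrow> nat) \<Rightarrow> nat \<Rightarrow> nat" where
  "plane_point u p = (\<lambda>i\<in>{..<r}. if i = 0 then fst u else if i = 1 then snd u else p i)"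

lemma plane_point_apply [simp]: "plane_point u p 0 = fst u" "plane_point u p (Suc 0) = snd u"
  using zero_less_r one_less_r by (auto simp: plane_point_def)

lemma plane_point_in_lattice: "u \<in> sq_sites n \<Longrightarrow> p \<in> planes \<Longrightarrow> plane_point u p \<in> lattice r n"
  unfolding lattice_iff plane_point_def planes_def sq_sites_def by (auto simp: PiE_def Pi_def)

lemma plane_point_inj:
  assumes p: "p \<in> planes" and p': "p' \<in> planes" and e: "plane_point u p = plane_point u' p'"
  shows "u = u' \<and> p = p'"
proof -
  have "u = u'" using e by (metis plane_point_apply prod_eq_iff)
  moreover have "p = p'"
  proof
    fix i show "p i = p' i"
    proof (cases "i \<in> {2..<r}")
      case True
      hence "plane_point u p i = p i" "plane_point u' p' i = p' i" by (auto simp: plane_point_def)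
      thus ?thesis using e by metis
    next
      case False
      thus ?thesis using p p' by (auto simp: planes_def PiE_def extensional_def)
    qed
  qed
  ultimately show ?thesis by blast
qed

lemma shift_plane_point:
  "shift 0 (plane_point u p) = plane_point (right_of u) p"
  "shift (Suc 0) (plane_point u p) = plane_point (up_of u) p"
  using zero_less_r one_less_r by (auto simp: shift_def plane_point_def right_of_def up_of_def fun_eq_iff)

lemma bij_betw_plane_point:
  "bij_betw (\<lambda>(p, u). plane_point u p) (planes \<times> sq_sites n) (lattice r n)"
  unfolding bij_betw_def
proof (intro conjI)
  show "inj_on (\<lambda>(p, u). plane_point u p) (planes \<times> sq_sites n)"
    using plane_point_inj by (intro inj_onI) auto
next
  show "(\<lambda>(p, u). plane_point u p) ` (planes \<times> sq_sites n) = lattice r n"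
  proof (intro equalityI subsetI)
    fix x assume "x \<in> (\<lambda>(p, u). plane_point u p) ` (planes \<times> sq_sites n)"
    thus "x \<in> lattice r n" by (auto intro!: plane_point_in_lattice)
  next
    fix x assume x: "x \<in> lattice r n"
    define p where "p = restrict x {2..<r}"
    have "p \<in> planes" using x unfolding p_def planes_def lattice_iff by auto
    moreover have "(x 0, x 1) \<in> sq_sites n"
      using x zero_less_r one_less_r unfolding lattice_iff sq_sites_def by auto
    moreover have "plane_point (x 0, x 1) p = x"
    proof
      fix i show "plane_point (x 0, x 1) p i = x i"
        using x unfolding plane_point_def p_def lattice_iff
        by (cases "i < r"; cases "i = 0"; cases "i = 1") auto
    qed
    ultimately show "x \<in> (\<lambda>(p, u). plane_point u p) ` (planes \<times> sq_sites n)"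
      by (auto intro!: image_eqI[where x = "(p, (x 0, x 1))"])
  qed
qed

lemma sum_lattice_planes:
  "(\<Sum>x\<in>lattice r n. F x) = (\<Sum>p\<in>planes. \<Sum>u\<in>sq_sites n. F (plane_point u p))"
proof -
  have "(\<Sum>x\<in>lattice r n. F x) = (\<Sum>pu\<in>planes \<times> sq_sites n. F ((\<lambda>(p, u). plane_point u p) pu))"
    by (rule sum.reindex_bij_betw[OF bij_betw_plane_point, symmetric])
  thus ?thesis by (simp add: sum.cartesian_product split_def)
qed

lemma finite_lattice: "finite (lattice r n)"
  unfolding lattice_def by (rule finite_PiE) auto

lemma finite_planes: "finite planes"
  unfolding planes_def by (rule finite_PiE) auto

lemma card_lattice: "card (lattice r n) = n ^ r"
  unfolding lattice_def by (simp add: card_PiE)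

lemma card_planes: "card planes = n ^ (r - 2)"
  unfolding planes_def by (simp add: card_PiE)

end

section \<open>An eigenvector of \<open>H\<close> built from a ground state of \<open>H_TI\<close>\<close>

abbreviation set_two_regs ::
    "('s \<Rightarrow> reg \<Rightarrow> nat) \<Rightarrow> 's \<Rightarrow> reg \<Rightarrow> nat \<Rightarrow> 's \<Rightarrow> reg \<Rightarrow> nat \<Rightarrow> 's \<Rightarrow> reg \<Rightarrow> nat" where
  "set_two_regs c x R1 \<alpha> y R2 \<beta> \<equiv> c(x := (c x)(R1 := \<alpha>), y := (c y)(R2 := \<beta>))"

lemma set_two_regs_apply:
  "x \<noteq> y \<Longrightarrow> set_two_regs c x R1 \<alpha> y R2 \<beta> z R
     = (if z = x \<and> R = R1 then \<alpha> else if z = y \<and> R = R2 then \<beta> else c z R)"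
  by auto

locale plane_eigenstate = tiled_torus +
  fixes D :: nat and hTI vTI :: "complex mat" and v0 :: "(nat \<times> nat \<Rightarrow> nat) \<Rightarrow> complex"
    and E :: complex and q0 :: "nat \<times> nat \<Rightarrow> nat"
  assumes v0_eigen: "\<And>q. q \<in> configs (sq_sites n) {..<D} \<Longrightarrow>
      (\<Sum>q'\<in>configs (sq_sites n) {..<D}. (ham (sq_sites n) (right_pairs n) (entry2 D hTI) q q'
          + ham (sq_sites n) (up_pairs n) (entry2 D vTI) q q') * v0 q') = E * v0 q"
    and q0: "q0 \<in> configs (sq_sites n) {..<D}" and v0_q0: "v0 q0 \<noteq> 0"
begin

lemma v0_eigen_sites:
  assumes q: "q \<in> configs (sq_sites n) {..<D}"
  shows "(\<Sum>u\<in>sq_sites n. \<Sum>\<alpha><D. \<Sum>\<beta><D.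
            entry2 D hTI (q u) (q (right_of u)) \<alpha> \<beta> * v0 (q(u := \<alpha>, right_of u := \<beta>)))
       + (\<Sum>u\<in>sq_sites n. \<Sum>\<alpha><D. \<Sum>\<beta><D.
            entry2 D vTI (q u) (q (up_of u)) \<alpha> \<beta> * v0 (q(u := \<alpha>, up_of u := \<beta>)))
       = E * v0 q"
proof -
  have fin: "finite (sq_sites n)" by (simp add: sq_sites_def)
  have "right_pairs n = {(u, w). u \<in> sq_sites n \<and> w = right_of u}"
    and "up_pairs n = {(u, w). u \<in> sq_sites n \<and> w = up_of u}"
    unfolding right_pairs_def right_of_def up_pairs_def up_of_def by simp_all
  hence "(\<Sum>q'\<in>configs (sq_sites n) {..<D}. ham (sq_sites n) (right_pairs n) (entry2 D hTI) q q' * v0 q')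
       + (\<Sum>q'\<in>configs (sq_sites n) {..<D}. ham (sq_sites n) (up_pairs n) (entry2 D vTI) q q' * v0 q')
       = (\<Sum>u\<in>sq_sites n. \<Sum>\<alpha><D. \<Sum>\<beta><D.
            entry2 D hTI (q u) (q (right_of u)) \<alpha> \<beta> * v0 (q(u := \<alpha>, right_of u := \<beta>)))
       + (\<Sum>u\<in>sq_sites n. \<Sum>\<alpha><D. \<Sum>\<beta><D.
            entry2 D vTI (q u) (q (up_of u)) \<alpha> \<beta> * v0 (q(u := \<alpha>, up_of u := \<beta>)))"
    using sum_ham_graph[OF fin _ q] right_of_in_sq_sites up_of_in_sq_sites by simp
  moreover have "E * v0 q
      = (\<Sum>q'\<in>configs (sq_sites n) {..<D}. ham (sq_sites n) (right_pairs n) (entry2 D hTI) q q' * v0 q')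
       + (\<Sum>q'\<in>configs (sq_sites n) {..<D}. ham (sq_sites n) (up_pairs n) (entry2 D vTI) q q' * v0 q')"
    unfolding v0_eigen[OF q, symmetric] by (simp add: distrib_right sum.distrib)
  ultimately show ?thesis by simp
qed

definition plane_config :: "(nat \<Rightarrow> nat) \<Rightarrow> ((nat \<Rightarrow> nat) \<Rightarrow> reg \<Rightarrow> nat) \<Rightarrow> nat \<times> nat \<Rightarrow> nat" where
  "plane_config p c = (\<lambda>u\<in>sq_sites n. c (plane_point u p) Q)"

definition tiled :: "((nat \<Rightarrow> nat) \<Rightarrow> reg \<Rightarrow> nat) \<Rightarrow> bool" where
  "tiled c \<longleftrightarrow> (\<forall>x\<in>lattice r n. c x T1 = colour 0 x \<and> c x T2 = number 0 x
                              \<and> c x T1' = colour 1 x \<and> c x T2' = number 1 x)"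

definition epr_paired :: "reg \<Rightarrow> reg \<Rightarrow> nat \<Rightarrow> ((nat \<Rightarrow> nat) \<Rightarrow> reg \<Rightarrow> nat) \<Rightarrow> bool" where
  "epr_paired Sa Sb j c \<longleftrightarrow> (\<forall>z\<in>lattice r n. c z Sb = c (shift j z) Sa)"

definition epr_paired_off :: "(nat \<Rightarrow> nat) \<Rightarrow> reg \<Rightarrow> reg \<Rightarrow> nat \<Rightarrow> ((nat \<Rightarrow> nat) \<Rightarrow> reg \<Rightarrow> nat) \<Rightarrow> bool" where
  "epr_paired_off x Sa Sb j c \<longleftrightarrow> (\<forall>z\<in>lattice r n. z \<noteq> x \<longrightarrow> c z Sb = c (shift j z) Sa)"

definition admissible :: "((nat \<Rightarrow> nat) \<Rightarrow> reg \<Rightarrow> nat) \<Rightarrow> bool" where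
  "admissible c \<longleftrightarrow> tiled c \<and> epr_paired S1 S2 0 c \<and> epr_paired S1' S2' 1 c"

definition planes_amplitude :: "((nat \<Rightarrow> nat) \<Rightarrow> reg \<Rightarrow> nat) \<Rightarrow> complex" where
  "planes_amplitude c = (\<Prod>p\<in>planes. v0 (plane_config p c))"

definition psi :: "((nat \<Rightarrow> nat) \<Rightarrow> reg \<Rightarrow> nat) \<Rightarrow> complex" where
  "psi c = (if admissible c then planes_amplitude c else 0)"

lemma tiled_set_two_regs:
  assumes "x \<noteq> y" "R1 \<notin> {T1, T2, T1', T2'}" "R2 \<notin> {T1, T2, T1', T2'}"
  shows "tiled (set_two_regs c x R1 \<alpha> y R2 \<beta>) = tiled c"
proof -
  have "T1 \<noteq> R1" "T2 \<noteq> R1" "T1' \<noteq> R1" "T2' \<noteq> R1" "T1 \<noteq> R2" "T2 \<noteq> R2" "T1' \<noteq> R2" "T2' \<noteq> R2"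
    using assms(2,3) by auto
  thus ?thesis unfolding tiled_def set_two_regs_apply[OF assms(1)] by simp
qed

lemma planes_amplitude_set_two_regs:
  assumes "x \<noteq> y" "R1 \<noteq> Q" "R2 \<noteq> Q"
  shows "planes_amplitude (set_two_regs c x R1 \<alpha> y R2 \<beta>) = planes_amplitude c"
proof -
  have "plane_config p (set_two_regs c x R1 \<alpha> y R2 \<beta>) = plane_config p c" for p
    using assms unfolding plane_config_def set_two_regs_apply[OF assms(1)] by auto
  thus ?thesis unfolding planes_amplitude_def by simp
qed

lemma epr_paired_set_two_regs_other:
  assumes "x \<noteq> y" "R1 \<notin> {Sa, Sb}" "R2 \<notin> {Sa, Sb}"
  shows "epr_paired Sa Sb j (set_two_regs c x R1 \<alpha> y R2 \<beta>) = epr_paired Sa Sb j c"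
proof -
  have "Sa \<noteq> R1" "Sb \<noteq> R1" "Sa \<noteq> R2" "Sb \<noteq> R2" using assms(2,3) by auto
  thus ?thesis unfolding epr_paired_def set_two_regs_apply[OF assms(1)] by simp
qed

lemma epr_paired_set_two_regs_pair:
  assumes x: "x \<in> lattice r n" and j: "j < r" and "Sa \<noteq> Sb"
  shows "epr_paired Sa Sb j (set_two_regs c x Sb \<alpha> (shift j x) Sa \<beta>)
     = (\<alpha> = \<beta> \<and> epr_paired_off x Sa Sb j c)"
proof -
  have ne: "x \<noteq> shift j x" using shift_neq[OF x j] by auto
  let ?c = "set_two_regs c x Sb \<alpha> (shift j x) Sa \<beta>"
  have "?c z Sb = (if z = x then \<alpha> else c z Sb)" for z
    unfolding set_two_regs_apply[OF ne] using \<open>Sa \<noteq> Sb\<close> by auto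
  moreover have "?c (shift j z) Sa = (if z = x then \<beta> else c (shift j z) Sa)" if z: "z \<in> lattice r n" for z
    unfolding set_two_regs_apply[OF ne] using \<open>Sa \<noteq> Sb\<close> shift_inj[OF z x] by auto
  ultimately show ?thesis unfolding epr_paired_def epr_paired_off_def using x by (auto; metis)
qed

lemma admissible_set_two_regs_Q:
  assumes "x \<noteq> y"
  shows "admissible (set_two_regs c x Q \<alpha> y Q \<beta>) = admissible c"
proof -
  have "tiled (set_two_regs c x Q \<alpha> y Q \<beta>) = tiled c"
    by (rule tiled_set_two_regs[OF assms]) simp_all
  moreover have "epr_paired Sa Sb j (set_two_regs c x Q \<alpha> y Q \<beta>) = epr_paired Sa Sb j c"
    if "Sa \<noteq> Q" "Sb \<noteq> Q" for Sa Sb j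
    using that by (intro epr_paired_set_two_regs_other[OF assms]) auto
  ultimately show ?thesis unfolding admissible_def by simp
qed

lemma psi_set_epr_pair:
  assumes x: "x \<in> lattice r n" and copy: "(Sa, Sb, j) \<in> {(S1, S2, 0), (S1', S2', 1)}"
  obtains K where "\<And>\<alpha> \<beta>. psi (set_two_regs c x Sb \<alpha> (shift j x) Sa \<beta>) = (if \<alpha> = \<beta> then K else 0)"
proof -
  have j: "j < r" using copy zero_less_r one_less_r by auto
  have ne: "x \<noteq> shift j x" using shift_neq[OF x j] by auto
  let ?c = "\<lambda>\<alpha> \<beta>. set_two_regs c x Sb \<alpha> (shift j x) Sa \<beta>"
  have tiled: "tiled (?c \<alpha> \<beta>) = tiled c" for \<alpha> \<beta>
    by (rule tiled_set_two_regs[OF ne]) (use copy in auto)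
  have amplitude: "planes_amplitude (?c \<alpha> \<beta>) = planes_amplitude c" for \<alpha> \<beta>
    by (rule planes_amplitude_set_two_regs[OF ne]) (use copy in auto)
  have pair: "epr_paired Sa Sb j (?c \<alpha> \<beta>) = (\<alpha> = \<beta> \<and> epr_paired_off x Sa Sb j c)" for \<alpha> \<beta>
    by (rule epr_paired_set_two_regs_pair[OF x j]) (use copy in auto)
  have other: "epr_paired Sa' Sb' j' (?c \<alpha> \<beta>) = epr_paired Sa' Sb' j' c"
    if "Sa' \<notin> {Sa, Sb}" "Sb' \<notin> {Sa, Sb}" for Sa' Sb' j' \<alpha> \<beta>
    by (rule epr_paired_set_two_regs_other[OF ne]) (use that in auto)
  have admissible: "admissible (?c \<alpha> \<beta>) \<longleftrightarrow> \<alpha> = \<beta> \<and> admissible (?c 0 0)" for \<alpha> \<beta>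
  proof -
    from copy consider "(Sa, Sb, j) = (S1, S2, 0)" | "(Sa, Sb, j) = (S1', S2', 1)" by blast
    thus ?thesis
    proof cases
      case 1
      thus ?thesis unfolding admissible_def tiled using pair other[of S1' S2'] by auto
    next
      case 2
      thus ?thesis unfolding admissible_def tiled using pair other[of S1 S2] by auto
    qed
  qed
  have "psi (?c \<alpha> \<beta>) = (if \<alpha> = \<beta> then psi (?c 0 0) else 0)" for \<alpha> \<beta>
    using admissible[of \<alpha> \<beta>] unfolding psi_def amplitude by auto
  thus ?thesis using that by blast
qed

lemma configs_apply_loc: "c \<in> configs (lattice r n) (loc D) \<Longrightarrow> x \<in> lattice r n \<Longrightarrow> c x \<in> loc D"
  by (auto simp: configs_def)

lemma tiled_regs:
  assumes tc: "tiled c" and x: "x \<in> lattice r n" and j: "j < r"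
  shows "c x T1 = colour 0 x" "c x T2 = number 0 x" "c x T1' = colour 1 x" "c x T2' = number 1 x"
    and "c (shift j x) T1 = (if j = 0 then colour 0 x else Suc (colour 0 x) mod 3)"
    and "c (shift j x) T2 = (if j = 0 then Suc (number 0 x) mod 3 else number 0 x)"
    and "c (shift j x) T1' = (if j = 1 then colour 1 x else Suc (colour 1 x) mod 3)"
    and "c (shift j x) T2' = (if j = 1 then Suc (number 1 x) mod 3 else number 1 x)"
  using tc x shift_in_lattice[OF x j] unfolding tiled_def
  by (auto simp: colour_shift[OF j] number_shift)

definition bond_action :: "((nat \<Rightarrow> nat) \<Rightarrow> reg \<Rightarrow> nat) \<Rightarrow> (nat \<Rightarrow> nat) \<Rightarrow> (nat \<Rightarrow> nat) \<Rightarrow> complex" where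
  "bond_action c x y = (\<Sum>a\<in>loc D. \<Sum>b\<in>loc D. h_full D hTI vTI (c x) (c y) a b * psi (c(x := a, y := b)))"

definition plane_action :: "complex mat \<Rightarrow> nat \<Rightarrow> ((nat \<Rightarrow> nat) \<Rightarrow> reg \<Rightarrow> nat) \<Rightarrow> (nat \<Rightarrow> nat) \<Rightarrow> complex" where
  "plane_action M j c x = (\<Sum>\<alpha><D. \<Sum>\<beta><D. entry2 D M (c x Q) (c (shift j x) Q) \<alpha> \<beta>
        * psi (set_two_regs c x Q \<alpha> (shift j x) Q \<beta>))"

lemma sum_A_gen_bond_eq_0:
  assumes c: "c \<in> configs (lattice r n) (loc D)" and tc: "tiled c"
    and x: "x \<in> lattice r n" and j: "j < r"
    and copy: "(N, Sa, Sb, i) \<in> {(T2, S1, S2, 0::nat), (T2', S1', S2', 1)}"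
  shows "(\<Sum>a\<in>loc D. \<Sum>b\<in>loc D.
            A_gen N Sa Sb (c x) (c (shift j x)) a b * psi (c(x := a, shift j x := b))) = 0"
proof -
  have num: "c x N = number i x"
    "c (shift j x) N = (if j = i then Suc (number i x) mod 3 else number i x)"
    using copy tiled_regs[OF tc x j] by auto
  show ?thesis
  proof (cases "j = i")
    case True
    obtain K where K: "\<And>\<alpha> \<beta>. psi (set_two_regs c x Sb \<alpha> (shift j x) Sa \<beta>) = (if \<alpha> = \<beta> then K else 0)"
      by (rule psi_set_epr_pair[OF x, of Sa Sb j c]) (use copy True in auto)
    show ?thesis
      by (rule sum_A_gen_EPR[where K = K])
        (use c x shift_in_lattice[OF x j] copy num True K in \<open>auto simp: configs_apply_loc\<close>)
  next
    case False
    thus ?thesis using num by (simp add: A_gen_eq_0)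
  qed
qed

lemma sum_swap_A_gen_bond_eq_0:
  assumes tc: "tiled c" and x: "x \<in> lattice r n" and j: "j < r"
    and copy: "(N, i) \<in> {(T2, 0::nat), (T2', 1)}"
  shows "(\<Sum>a\<in>loc D. \<Sum>b\<in>loc D.
            swap_term (A_gen N Sa Sb) (c x) (c (shift j x)) a b * psi (c(x := a, shift j x := b))) = 0"
proof -
  have "c x N = number i x"
    "c (shift j x) N = (if j = i then Suc (number i x) mod 3 else number i x)"
    using copy tiled_regs[OF tc x j] by auto
  thus ?thesis by (simp add: swap_A_gen_eq_0)
qed

lemma sum_h_RI_gen_bond:
  assumes c: "c \<in> configs (lattice r n) (loc D)" and tc: "tiled c"
    and x: "x \<in> lattice r n" and j: "j < r"
    and copy: "(N, M, i) \<in> {(T2, hTI, 0::nat), (T2', vTI, 1)}"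
  shows "(\<Sum>a\<in>loc D. \<Sum>b\<in>loc D.
            h_RI_gen D N M (c x) (c (shift j x)) a b * psi (c(x := a, shift j x := b)))
       = (if j = i then plane_action M i c x else 0)"
proof -
  have loc: "c x \<in> loc D" "c (shift j x) \<in> loc D"
    using c x shift_in_lattice[OF x j] by (auto simp: configs_apply_loc)
  have num: "c x N = number i x"
    "c (shift j x) N = (if j = i then Suc (number i x) mod 3 else number i x)"
    using copy tiled_regs[OF tc x j] by auto
  show ?thesis
  proof (cases "j = i")
    case True
    have "(\<Sum>a\<in>loc D. \<Sum>b\<in>loc D.
            h_RI_gen D N M (c x) (c (shift j x)) a b * psi (c(x := a, shift j x := b)))
        = (\<Sum>\<alpha><D. \<Sum>\<beta><D. entry2 D M (c x Q) (c (shift j x) Q) \<alpha> \<beta>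
            * psi (set_two_regs c x Q \<alpha> (shift j x) Q \<beta>))"
      by (rule sum_h_RI_gen[OF loc]) (use num True in auto)
    thus ?thesis using True unfolding plane_action_def by simp
  next
    case False
    thus ?thesis using num by (simp add: h_RI_gen_eq_0)
  qed
qed

text \<open>Along a bond no tiling or copy penalty is paid and \<open>A\<close> annihilates the EPR pairs; what remains
  is the loop penalty 2 of each copy whose colour changes along direction \<open>j\<close>, and the embedded 2D
  terms for \<open>j = 0, 1\<close>.\<close>

lemma bond_action_shift:
  assumes c: "c \<in> configs (lattice r n) (loc D)" and tc: "tiled c"
    and x: "x \<in> lattice r n" and j: "j < r"
  shows "bond_action c x (shift j x) = (if j < 2 then 2 else 4) * psi c
          + (if j = 0 then plane_action hTI 0 c x else 0) + (if j = 1 then plane_action vTI 1 c x else 0)"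
proof -
  have loc: "c x \<in> loc D" "c (shift j x) \<in> loc D"
    using c x shift_in_lattice[OF x j] by (auto simp: configs_apply_loc)
  show ?thesis
    unfolding bond_action_def sum_h_full_split sum_classical_terms[OF loc]
    using sum_A_gen_bond_eq_0[OF c tc x j] sum_swap_A_gen_bond_eq_0[OF tc x j]
      sum_h_RI_gen_bond[OF c tc x j] tiled_regs[OF tc x j]
    by (cases "j = 0"; cases "j = 1") (simp_all add: tileV_def)
qed

lemma sum_bond_actions_site:
  assumes c: "c \<in> configs (lattice r n) (loc D)" and tc: "tiled c" and x: "x \<in> lattice r n"
  shows "(\<Sum>j<r. bond_action c x (shift j x))
       = 4 * (of_nat r - 1) * psi c + (plane_action hTI 0 c x + plane_action vTI 1 c x)"
proof -
  have "(\<Sum>j<r. (if j < 2 then 2 else 4) * psi c) = 4 * (of_nat r - 1) * psi c"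
    using sum_two_then_four[OF r_ge_2, where 'a = complex] by (simp add: sum_distrib_right[symmetric])
  moreover have "(\<Sum>j<r. if j = 0 then plane_action hTI 0 c x else 0) = plane_action hTI 0 c x"
    and "(\<Sum>j<r. if j = 1 then plane_action vTI 1 c x else 0) = plane_action vTI 1 c x"
    using zero_less_r one_less_r by (simp_all only: sum.delta finite_lessThan lessThan_iff if_True)
  ultimately show ?thesis
    using bond_action_shift[OF c tc x] by (simp add: sum.distrib add.assoc)
qed

lemma plane_config_in_configs:
  assumes c: "c \<in> configs (lattice r n) (loc D)" and p: "p \<in> planes"
  shows "plane_config p c \<in> configs (sq_sites n) {..<D}"
proof -
  have "c (plane_point u p) Q < D" if "u \<in> sq_sites n" for u
    using c plane_point_in_lattice[OF that p] loc_lessD[of _ D Q] by (auto simp: configs_def)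
  thus ?thesis unfolding configs_def plane_config_def by auto
qed

lemma plane_config_apply: "u \<in> sq_sites n \<Longrightarrow> plane_config p c u = c (plane_point u p) Q"
  by (simp add: plane_config_def)

lemma plane_config_set_two_regs:
  assumes p: "p \<in> planes" and p': "p' \<in> planes" and u1: "u1 \<in> sq_sites n" and u2: "u2 \<in> sq_sites n"
    and "u1 \<noteq> u2"
  shows "plane_config p' (set_two_regs c (plane_point u1 p) Q \<alpha> (plane_point u2 p) Q \<beta>)
       = (if p' = p then (plane_config p c)(u1 := \<alpha>, u2 := \<beta>) else plane_config p' c)"
proof
  have ne: "plane_point u1 p \<noteq> plane_point u2 p" using plane_point_inj[OF p p] \<open>u1 \<noteq> u2\<close> by blast
  fix u
  show "plane_config p' (set_two_regs c (plane_point u1 p) Q \<alpha> (plane_point u2 p) Q \<beta>) u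
       = (if p' = p then (plane_config p c)(u1 := \<alpha>, u2 := \<beta>) else plane_config p' c) u"
  proof (cases "u \<in> sq_sites n")
    case False
    thus ?thesis using u1 u2 by (auto simp: plane_config_def)
  next
    case True
    have "(plane_point u p' = plane_point u1 p) = (u = u1 \<and> p' = p)"
      and "(plane_point u p' = plane_point u2 p) = (u = u2 \<and> p' = p)"
      using plane_point_inj[OF p' p] by blast+
    thus ?thesis using True u1 u2 \<open>u1 \<noteq> u2\<close>
      unfolding plane_config_apply[OF True] set_two_regs_apply[OF ne] by (auto simp: plane_config_apply)
  qed
qed

definition off_plane_amplitude :: "(nat \<Rightarrow> nat) \<Rightarrow> ((nat \<Rightarrow> nat) \<Rightarrow> reg \<Rightarrow> nat) \<Rightarrow> complex" where
  "off_plane_amplitude p c = (\<Prod>p'\<in>planes - {p}. v0 (plane_config p' c))"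

lemma psi_plane_factor:
  assumes "admissible c" and "p \<in> planes"
  shows "psi c = v0 (plane_config p c) * off_plane_amplitude p c"
  using assms finite_planes
  by (simp add: psi_def planes_amplitude_def off_plane_amplitude_def prod.remove)

lemma psi_set_two_plane_sites:
  assumes adm: "admissible c" and p: "p \<in> planes"
    and u: "u \<in> sq_sites n" and w: "w \<in> sq_sites n" and "u \<noteq> w"
  shows "psi (set_two_regs c (plane_point u p) Q \<alpha> (plane_point w p) Q \<beta>)
       = v0 ((plane_config p c)(u := \<alpha>, w := \<beta>)) * off_plane_amplitude p c"
proof -
  let ?c = "set_two_regs c (plane_point u p) Q \<alpha> (plane_point w p) Q \<beta>"
  have "plane_point u p \<noteq> plane_point w p" using plane_point_inj[OF p p] \<open>u \<noteq> w\<close> by blast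
  hence "admissible ?c" using admissible_set_two_regs_Q adm by blast
  hence "psi ?c = v0 (plane_config p ?c) * off_plane_amplitude p ?c" by (rule psi_plane_factor[OF _ p])
  also have "off_plane_amplitude p ?c = off_plane_amplitude p c"
    unfolding off_plane_amplitude_def
    by (rule prod.cong[OF refl]) (simp add: plane_config_set_two_regs[OF p _ u w \<open>u \<noteq> w\<close>])
  also have "plane_config p ?c = (plane_config p c)(u := \<alpha>, w := \<beta>)"
    using plane_config_set_two_regs[OF p p u w \<open>u \<noteq> w\<close>] by simp
  finally show ?thesis .
qed

lemma plane_action_plane_point:
  assumes adm: "admissible c" and p: "p \<in> planes" and u: "u \<in> sq_sites n"
  shows "plane_action hTI 0 c (plane_point u p)
       = (\<Sum>\<alpha><D. \<Sum>\<beta><D. entry2 D hTI (plane_config p c u) (plane_config p c (right_of u)) \<alpha> \<beta>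
            * v0 ((plane_config p c)(u := \<alpha>, right_of u := \<beta>))) * off_plane_amplitude p c"
    and "plane_action vTI 1 c (plane_point u p)
       = (\<Sum>\<alpha><D. \<Sum>\<beta><D. entry2 D vTI (plane_config p c u) (plane_config p c (up_of u)) \<alpha> \<beta>
            * v0 ((plane_config p c)(u := \<alpha>, up_of u := \<beta>))) * off_plane_amplitude p c"
proof -
  have "right_of u \<in> sq_sites n" "u \<noteq> right_of u" "up_of u \<in> sq_sites n" "u \<noteq> up_of u"
    using right_of_in_sq_sites[OF u] up_of_in_sq_sites[OF u] by auto
  thus "plane_action hTI 0 c (plane_point u p)
       = (\<Sum>\<alpha><D. \<Sum>\<beta><D. entry2 D hTI (plane_config p c u) (plane_config p c (right_of u)) \<alpha> \<beta>
            * v0 ((plane_config p c)(u := \<alpha>, right_of u := \<beta>))) * off_plane_amplitude p c"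
    and "plane_action vTI 1 c (plane_point u p)
       = (\<Sum>\<alpha><D. \<Sum>\<beta><D. entry2 D vTI (plane_config p c u) (plane_config p c (up_of u)) \<alpha> \<beta>
            * v0 ((plane_config p c)(u := \<alpha>, up_of u := \<beta>))) * off_plane_amplitude p c"
    using u unfolding plane_action_def
    by (simp_all add: shift_plane_point psi_set_two_plane_sites[OF adm p] plane_config_apply
        sum_distrib_right mult.assoc)
qed

text \<open>On an admissible configuration the embedded 2D terms act on the plane \<open>p\<close> as \<open>H_TI\<close>.\<close>

lemma sum_plane_action_plane:
  assumes c: "c \<in> configs (lattice r n) (loc D)" and p: "p \<in> planes" and adm: "admissible c"
  shows "(\<Sum>u\<in>sq_sites n. plane_action hTI 0 c (plane_point u p) + plane_action vTI 1 c (plane_point u p))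
       = E * psi c"
proof -
  let ?q = "plane_config p c"
  have "(\<Sum>u\<in>sq_sites n. plane_action hTI 0 c (plane_point u p) + plane_action vTI 1 c (plane_point u p))
      = (\<Sum>u\<in>sq_sites n. (\<Sum>\<alpha><D. \<Sum>\<beta><D.
             entry2 D hTI (?q u) (?q (right_of u)) \<alpha> \<beta> * v0 (?q(u := \<alpha>, right_of u := \<beta>)))
           * off_plane_amplitude p c
         + (\<Sum>\<alpha><D. \<Sum>\<beta><D.
             entry2 D vTI (?q u) (?q (up_of u)) \<alpha> \<beta> * v0 (?q(u := \<alpha>, up_of u := \<beta>)))
           * off_plane_amplitude p c)"
    by (rule sum.cong[OF refl]) (simp only: plane_action_plane_point[OF adm p])
  also have "\<dots> = ((\<Sum>u\<in>sq_sites n. \<Sum>\<alpha><D. \<Sum>\<beta><D.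
             entry2 D hTI (?q u) (?q (right_of u)) \<alpha> \<beta> * v0 (?q(u := \<alpha>, right_of u := \<beta>)))
       + (\<Sum>u\<in>sq_sites n. \<Sum>\<alpha><D. \<Sum>\<beta><D.
             entry2 D vTI (?q u) (?q (up_of u)) \<alpha> \<beta> * v0 (?q(u := \<alpha>, up_of u := \<beta>))))
         * off_plane_amplitude p c"
    by (simp only: sum.distrib distrib_right sum_distrib_right)
  also have "\<dots> = E * psi c"
    by (simp add: v0_eigen_sites[OF plane_config_in_configs[OF c p]] psi_plane_factor[OF adm p])
  finally show ?thesis .
qed

lemma sum_plane_action:
  assumes c: "c \<in> configs (lattice r n) (loc D)"
  shows "(\<Sum>x\<in>lattice r n. plane_action hTI 0 c x + plane_action vTI 1 c x)
       = of_nat (card planes) * E * psi c"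
proof (cases "admissible c")
  case True
  have "(\<Sum>x\<in>lattice r n. plane_action hTI 0 c x + plane_action vTI 1 c x)
      = (\<Sum>p\<in>planes. \<Sum>u\<in>sq_sites n. plane_action hTI 0 c (plane_point u p)
                                          + plane_action vTI 1 c (plane_point u p))"
    by (rule sum_lattice_planes)
  also have "\<dots> = (\<Sum>p\<in>planes. E * psi c)"
    using sum_plane_action_plane[OF c _ True] by simp
  finally show ?thesis by simp
next
  case False
  have "plane_action M j c x = 0" if x: "x \<in> lattice r n" and j: "j < r" for M j x
  proof -
    have "x \<noteq> shift j x" using shift_neq[OF x j] by auto
    hence "admissible (set_two_regs c x Q \<alpha> (shift j x) Q \<beta>) = admissible c" for \<alpha> \<beta>
      by (rule admissible_set_two_regs_Q)
    thus ?thesis unfolding plane_action_def psi_def using False by simp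
  qed
  moreover have "psi c = 0" unfolding psi_def using False by simp
  ultimately show ?thesis using zero_less_r one_less_r by simp
qed

lemma embed2_h_full_commute:
  assumes c: "c \<in> configs (lattice r n) (loc D)" and u: "u \<in> lattice r n" and v: "v \<in> lattice r n"
  shows "embed2 (lattice r n) u v (h_full D hTI vTI) c c' = embed2 (lattice r n) v u (h_full D hTI vTI) c c'"
proof -
  have "h_full D hTI vTI (c u) (c v) (c' u) (c' v) = h_full D hTI vTI (c v) (c u) (c' v) (c' u)"
    using configs_apply_loc[OF c] u v by (intro h_full_swap_sites) auto
  moreover have "lattice r n - {u, v} = lattice r n - {v, u}" by auto
  ultimately show ?thesis unfolding embed2_def by simp
qed

text \<open>\<open>h\<close> does not change tiles, so it never connects an untiled to a tiled configuration.\<close>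

lemma embed2_h_full_untiled:
  assumes c: "c \<in> configs (lattice r n) (loc D)" and not_tiled: "\<not> tiled c" and tiled': "tiled c'"
    and u: "u \<in> lattice r n" and v: "v \<in> lattice r n"
  shows "embed2 (lattice r n) u v (h_full D hTI vTI) c c' = 0"
proof (cases "\<forall>w\<in>lattice r n - {u, v}. c w = c' w")
  case False
  thus ?thesis unfolding embed2_def by (rule if_not_P)
next
  case True
  show ?thesis
  proof (rule ccontr)
    assume "embed2 (lattice r n) u v (h_full D hTI vTI) c c' \<noteq> 0"
    hence "h_full D hTI vTI (c u) (c v) (c' u) (c' v) \<noteq> 0" unfolding embed2_def using True by simp
    hence "same_classical (c u) (c' u) \<and> same_classical (c v) (c' v)"
      using h_full_eq_0_unless_same_classical by blast
    hence "c w T1 = c' w T1 \<and> c w T2 = c' w T2 \<and> c w T1' = c' w T1' \<and> c w T2' = c' w T2'"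
      if "w \<in> lattice r n" for w
      using True that unfolding same_classical_def by (cases "w = u \<or> w = v") auto
    hence "tiled c" using tiled' unfolding tiled_def by auto
    thus False using not_tiled by simp
  qed
qed

lemma sum_ham_psi_tiled:
  assumes c: "c \<in> configs (lattice r n) (loc D)" and tc: "tiled c"
  shows "(\<Sum>c'\<in>configs (lattice r n) (loc D). ham (lattice r n) (oriented_edges r n) (h_full D hTI vTI) c c' * psi c')
       = (4 * (of_nat r - 1) * of_nat (n ^ r) + of_nat (n ^ (r - 2)) * E) * psi c"
proof -
  define g where "g u v = (\<Sum>c'\<in>configs (lattice r n) (loc D).
                              embed2 (lattice r n) u v (h_full D hTI vTI) c c' * psi c')" for u v
  have "(\<Sum>c'\<in>configs (lattice r n) (loc D). ham (lattice r n) (oriented_edges r n) (h_full D hTI vTI) c c' * psi c')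
      = (\<Sum>c'\<in>configs (lattice r n) (loc D). \<Sum>uv\<in>oriented_edges r n.
            embed2 (lattice r n) (fst uv) (snd uv) (h_full D hTI vTI) c c' * psi c')"
    unfolding ham_def by (simp add: sum_distrib_right split_def)
  also have "\<dots> = (\<Sum>(u, v)\<in>oriented_edges r n. g u v)"
    unfolding g_def by (subst sum.swap) (simp add: split_def)
  also have "\<dots> = (\<Sum>x\<in>lattice r n. \<Sum>j<r. g x (shift j x))"
    unfolding g_def using embed2_h_full_commute[OF c] by (intro sum_oriented_edges sum.cong) auto
  also have "\<dots> = (\<Sum>x\<in>lattice r n. \<Sum>j<r. bond_action c x (shift j x))"
    unfolding g_def bond_action_def
    using shift_in_lattice shift_neq
    by (intro sum.cong refl sum_embed2[OF finite_lattice finite_loc c]) (auto dest: sym)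
  also have "\<dots> = (\<Sum>x\<in>lattice r n. 4 * (of_nat r - 1) * psi c
                                    + (plane_action hTI 0 c x + plane_action vTI 1 c x))"
    by (intro sum.cong refl sum_bond_actions_site[OF c tc])
  also have "\<dots> = of_nat (n ^ r) * (4 * (of_nat r - 1) * psi c) + of_nat (card planes) * E * psi c"
    unfolding sum.distrib[of "\<lambda>_. 4 * (of_nat r - 1) * psi c"] sum_plane_action[OF c]
    by (simp add: card_lattice)
  finally show ?thesis by (simp add: card_planes algebra_simps)
qed

lemma sum_ham_psi_untiled:
  assumes c: "c \<in> configs (lattice r n) (loc D)" and not_tiled: "\<not> tiled c"
  shows "(\<Sum>c'\<in>configs (lattice r n) (loc D). ham (lattice r n) (oriented_edges r n) (h_full D hTI vTI) c c' * psi c') = 0"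
proof (rule sum.neutral, intro ballI)
  fix c' assume c': "c' \<in> configs (lattice r n) (loc D)"
  show "ham (lattice r n) (oriented_edges r n) (h_full D hTI vTI) c c' * psi c' = 0"
  proof (cases "tiled c'")
    case True
    have "ham (lattice r n) (oriented_edges r n) (h_full D hTI vTI) c c' = 0"
      unfolding ham_def
    proof (rule sum.neutral, clarify)
      fix u v assume "(u, v) \<in> oriented_edges r n"
      then obtain a b where "{u, v} = {a, b}" "a \<in> lattice r n" "b \<in> lattice r n"
        unfolding oriented_edges_def edges_def by blast
      hence "u \<in> lattice r n" "v \<in> lattice r n" by (auto simp: doubleton_eq_iff)
      thus "embed2 (lattice r n) u v (h_full D hTI vTI) c c' = 0"
        by (rule embed2_h_full_untiled[OF c not_tiled True])
    qed
    thus ?thesis by simp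
  qed (simp add: psi_def admissible_def)
qed

definition ground_config :: "(nat \<Rightarrow> nat) \<Rightarrow> reg \<Rightarrow> nat" where
  "ground_config = (\<lambda>x\<in>lattice r n. \<lambda>R. case R of
       T1 \<Rightarrow> colour 0 x | T2 \<Rightarrow> number 0 x | T1' \<Rightarrow> colour 1 x | T2' \<Rightarrow> number 1 x
     | Q \<Rightarrow> q0 (x 0, x 1) | _ \<Rightarrow> 0)"

lemma ground_config_in_configs: "ground_config \<in> configs (lattice r n) (loc D)"
proof -
  have "q0 (x 0, x 1) < D" if x: "x \<in> lattice r n" for x
  proof -
    have "(x 0, x 1) \<in> sq_sites n"
      using x zero_less_r one_less_r unfolding lattice_iff sq_sites_def by auto
    thus ?thesis using q0 unfolding configs_def by auto
  qed
  hence "(\<lambda>R. case R of T1 \<Rightarrow> colour 0 x | T2 \<Rightarrow> number 0 x | T1' \<Rightarrow> colour 1 x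
        | T2' \<Rightarrow> number 1 x | Q \<Rightarrow> q0 (x 0, x 1) | _ \<Rightarrow> 0) \<in> loc D" if x: "x \<in> lattice r n" for x
    using x unfolding loc_def by (auto simp: PiE_def Pi_def extensional_def reg_dim_def split: reg.splits)
  thus ?thesis unfolding ground_config_def configs_def restrict_PiE_iff by blast
qed

lemma psi_ground_config: "psi ground_config \<noteq> 0"
proof -
  have "admissible ground_config"
    unfolding admissible_def tiled_def epr_paired_def ground_config_def
    using shift_in_lattice zero_less_r one_less_r by simp
  moreover have "plane_config p ground_config = q0" if p: "p \<in> planes" for p
  proof
    fix u show "plane_config p ground_config u = q0 u"
    proof (cases "u \<in> sq_sites n")
      case True
      hence "plane_point u p \<in> lattice r n" by (rule plane_point_in_lattice[OF _ p])
      thus ?thesis using True by (simp add: plane_config_def ground_config_def)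
    next
      case False
      thus ?thesis using PiE_arb[OF q0[unfolded configs_def] False] by (simp add: plane_config_def)
    qed
  qed
  ultimately show ?thesis using v0_q0 by (simp add: psi_def planes_amplitude_def)
qed

theorem eigenvalue_H_r:
  "eigenvalue (H_r D hTI vTI r n) (4 * (of_nat r - 1) * of_nat (n ^ r) + of_nat (n ^ (r - 2)) * E)"
  unfolding H_r_def
proof (rule eigenvalue_op_matI)
  show "finite (configs (lattice r n) (loc D))" by (rule finite_configs[OF finite_lattice finite_loc])
  show "(\<Sum>c'\<in>configs (lattice r n) (loc D). ham (lattice r n) (oriented_edges r n) (h_full D hTI vTI) c c' * psi c')
       = (4 * (of_nat r - 1) * of_nat (n ^ r) + of_nat (n ^ (r - 2)) * E) * psi c"
    if c: "c \<in> configs (lattice r n) (loc D)" for c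
  proof (cases "tiled c")
    case False
    thus ?thesis using sum_ham_psi_untiled[OF c] by (simp add: psi_def admissible_def)
  qed (rule sum_ham_psi_tiled[OF c])
qed (rule ground_config_in_configs, rule psi_ground_config)

end

lemma pair_index_less: "p < D \<Longrightarrow> q < D \<Longrightarrow> p * D + q < D * (D::nat)"
proof -
  assume "p < D" "q < D"
  hence "p * D + q < (p + 1) * D" by simp
  also have "\<dots> \<le> D * D" using \<open>p < D\<close> by (intro mult_le_mono1) simp
  finally show ?thesis .
qed

lemma psd_entry2_hermitian:
  assumes "psd (D * D) M" and "p < D" "q < D" "p' < D" "q' < D"
  shows "entry2 D M p q p' q' = cnj (entry2 D M p' q' p q)"
  using assms pair_index_less[of p D q] pair_index_less[of p' D q'] unfolding psd_def entry2_def by blast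

lemma H_TI_hermitian:
  assumes h_psd: "psd (D * D) hTI" and v_psd: "psd (D * D) vTI"
    and i: "i < card (configs (sq_sites n) {..<D})" and j: "j < card (configs (sq_sites n) {..<D})"
  shows "H_TI D hTI vTI n $$ (i, j) = cnj (H_TI D hTI vTI n $$ (j, i))"
proof -
  let ?B = "configs (sq_sites n) {..<D}"
  let ?e = "op_mat_enum ?B"
  have "finite ?B" by (rule finite_configs) (simp_all add: sq_sites_def)
  hence e: "?e i \<in> ?B" "?e j \<in> ?B" using bij_betw_op_mat_enum i j by (auto dest: bij_betwE)
  have "right_pairs n \<subseteq> sq_sites n \<times> sq_sites n" "up_pairs n \<subseteq> sq_sites n \<times> sq_sites n"
    unfolding right_pairs_def up_pairs_def sq_sites_def by auto
  note herm = ham_hermitian[OF psd_entry2_hermitian[OF h_psd] this(1) e]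
    ham_hermitian[OF psd_entry2_hermitian[OF v_psd] this(2) e]
  show ?thesis unfolding H_TI_def op_mat_eq_mat using i j herm by simp
qed

theorem E0_H_r_le:
  assumes n: "3 dvd n" "n \<ge> 3" and r: "r \<ge> 2" and D: "D \<ge> 1"
    and h_psd: "psd (D * D) hTI" and v_psd: "psd (D * D) vTI"
  shows "E0 (H_r D hTI vTI r n)
       \<le> 4 * (real r - 1) * real n ^ r + real n ^ (r - 2) * E0 (H_TI D hTI vTI n)"
proof -
  let ?B = "configs (sq_sites n) {..<D}"
  let ?E = "E0 (H_TI D hTI vTI n)"
  have fin: "finite ?B" by (rule finite_configs) (simp_all add: sq_sites_def)
  have "(\<lambda>u\<in>sq_sites n. 0) \<in> ?B" using D unfolding configs_def by auto
  hence "card ?B > 0" using fin card_gt_0_iff by blast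
  moreover have "H_TI D hTI vTI n \<in> carrier_mat (card ?B) (card ?B)"
    unfolding H_TI_def by (rule op_mat_carrier_mat)
  ultimately have "eigenvalue (H_TI D hTI vTI n) (complex_of_real ?E)"
    using eigenvalue_E0 H_TI_hermitian[OF h_psd v_psd] by blast
  then obtain v0 q0 where
    v0: "\<And>q. q \<in> ?B \<Longrightarrow> (\<Sum>q'\<in>?B. (ham (sq_sites n) (right_pairs n) (entry2 D hTI) q q'
          + ham (sq_sites n) (up_pairs n) (entry2 D vTI) q q') * v0 q') = complex_of_real ?E * v0 q"
    and q0: "q0 \<in> ?B" "v0 q0 \<noteq> 0"
    unfolding H_TI_def by (rule eigenvalue_op_matE[OF fin]) blast
  interpret plane_eigenstate n r D hTI vTI v0 "complex_of_real ?E" q0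
    by unfold_locales (use n r v0 q0 in auto)
  have "eigenvalue (H_r D hTI vTI r n)
      (complex_of_real (4 * (real r - 1) * real n ^ r + real n ^ (r - 2) * ?E))"
    using eigenvalue_H_r by simp
  moreover have "H_r D hTI vTI r n \<in> carrier_mat (card (configs (lattice r n) (loc D)))
                                                 (card (configs (lattice r n) (loc D)))"
    unfolding H_r_def by (rule op_mat_carrier_mat)
  ultimately show ?thesis using E0_le_eigenvalue by blast
qed

theorem mainTheorem3:
  fixes r :: nat and L :: "bool list set" and f :: "bool list \<Rightarrow> int"
    and n0 :: int and D :: nat and hTI vTI :: "complex mat"
  assumes r2: "r \<ge> 2"
    and f_mult3: "\<forall>x. 3 dvd f x"
    and f_prime: "\<forall>x. prime (f x div 3)"
    and f_poly: "\<exists>c k. \<forall>x. ln (real_of_int (f x)) \<le> c * (real (length x) + 1) ^ k"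
    and D_pos: "D \<ge> 1"
    and h_psd: "psd (D * D) hTI"
    and v_psd: "psd (D * D) vTI"
    and yes: "\<forall>k::nat. \<exists>C::real. \<forall>x\<in>L. f x \<ge> n0 \<longrightarrow>
               E0 (H_TI D hTI vTI (nat (f x))) \<le> C / real_of_int (f x) ^ k"
    and no: "\<exists>c::real. c > 0 \<and> (\<forall>x. x \<notin> L \<and> f x \<ge> n0 \<longrightarrow>
               E0 (H_TI D hTI vTI (nat (f x))) \<ge> c / real_of_int (f x) ^ 3)"
  shows "\<forall>k::nat. \<exists>C::real. \<forall>x\<in>L. f x \<ge> n0 \<longrightarrow>
           E0 (H_r D hTI vTI r (nat (f x)))
             \<le> 4 * real_of_int (f x) ^ r * (real r - 1) + C / real_of_int (f x) ^ k"
proof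
  fix k :: nat
  obtain C where C: "\<forall>x\<in>L. f x \<ge> n0 \<longrightarrow>
      E0 (H_TI D hTI vTI (nat (f x))) \<le> C / real_of_int (f x) ^ (k + (r - 2))"
    using yes by blast
  have "E0 (H_r D hTI vTI r (nat (f x)))
          \<le> 4 * real_of_int (f x) ^ r * (real r - 1) + C / real_of_int (f x) ^ k"
    if "x \<in> L" "f x \<ge> n0" for x
  proof -
    define n where "n = nat (f x)"
    define m where "m = f x div 3"
    have m: "m \<ge> 2" "f x = 3 * m" using f_prime prime_ge_2_int f_mult3 unfolding m_def by auto
    hence "n = 3 * nat m" unfolding n_def by simp
    hence n: "3 dvd n" "n \<ge> 3" "real n = real_of_int (f x)" using m unfolding n_def by simp_all
    have "E0 (H_r D hTI vTI r n) \<le> 4 * (real r - 1) * real n ^ r + real n ^ (r - 2) * E0 (H_TI D hTI vTI n)"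
      using E0_H_r_le[OF n(1,2) r2 D_pos h_psd v_psd] .
    also have "\<dots> \<le> 4 * (real r - 1) * real n ^ r + real n ^ (r - 2) * (C / real n ^ (k + (r - 2)))"
      using C that n unfolding n_def by (intro add_left_mono mult_left_mono) auto
    also have "\<dots> = 4 * (real r - 1) * real n ^ r + C / real n ^ k"
      using n by (simp add: power_add field_simps)
    finally show ?thesis using n unfolding n_def by (simp add: algebra_simps)
  qed
  thus "\<exists>C. \<forall>x\<in>L. f x \<ge> n0 \<longrightarrow>
          E0 (H_r D hTI vTI r (nat (f x))) \<le> 4 * real_of_int (f x) ^ r * (real r - 1) + C / real_of_int (f x) ^ k"
    by blast
qed

end
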